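(* Let $\varphi\colon (A,m,K)\to (B,n,L)$ be a local homomorphism of noetherian local rings. For a proper ideal $I$ of $A$, let $\pi_I\colon A\to A/I$ and $\pi_{IB}\colon B\to B/IB$ be the canonical surjections. (1) $\operatorname{rd}(\pi_I)\geq \operatorname{rd}(\pi_{IB})$ for every proper ideal $I$ of $A$. (2) $\varphi$ is basically regular if and only if $\operatorname{rd}(\pi_I)=\operatorname{rd}(\pi_{IB})$ for each proper ideal $I$ of $A$.
   Context: All rings are commutative and noetherian with identity. A local homomorphism $\varphi\colon (A,m,K)\to(B,n,L)$ satisfies $\varphi(m)\subseteq n$. The regularity defect $\operatorname{rd}(\varphi)$ is the $L$-dimension of the kernel of the natural $L$-linear map $m/m^2\otimes_K L\to n/n^2$, $\bar x\otimes\bar b\mapsto \overline{\varphi(x)b}$; $\varphi$ is basically regular if for every minimal basis (minimal generating set) $x_1,\dots,x_r$ of $m$, the elements $\varphi(x_1),\dots,\varphi(x_r)$ are part of a minimal basis of $n$ (vacuously true if $A$ is a field). *)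

theory Defs
  imports "HOL-Algebra.Algebra"
begin

definition noetherian_ring :: "('a, 'c) ring_scheme \<Rightarrow> bool" where
  "noetherian_ring R \<longleftrightarrow> cring R \<and>
     (\<forall>I. ideal I R \<longrightarrow> (\<exists>S. finite S \<and> S \<subseteq> carrier R \<and> I = Idl\<^bsub>R\<^esub> S))"

definition noetherian_local_ring :: "('a, 'c) ring_scheme \<Rightarrow> bool" where
  "noetherian_local_ring R \<longleftrightarrow> noetherian_ring R \<and> (\<exists>!m. maximalideal m R)"

definition max_ideal :: "('a, 'c) ring_scheme \<Rightarrow> 'a set" where
  "max_ideal R = (THE m. maximalideal m R)"

definition local_hom :: "('a, 'c) ring_scheme \<Rightarrow> ('b, 'd) ring_scheme \<Rightarrow> ('a \<Rightarrow> 'b) \<Rightarrow> bool" where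
  "local_hom A B \<phi> \<longleftrightarrow> \<phi> \<in> ring_hom A B \<and> \<phi> ` max_ideal A \<subseteq> max_ideal B"

definition ideal_sq :: "('a, 'c) ring_scheme \<Rightarrow> 'a set \<Rightarrow> 'a set" where
  "ideal_sq R I = Idl\<^bsub>R\<^esub> {a \<otimes>\<^bsub>R\<^esub> b | a b. a \<in> I \<and> b \<in> I}"

definition num_gens :: "('a, 'c) ring_scheme \<Rightarrow> 'a set \<Rightarrow> nat" where
  "num_gens R I = (LEAST k. \<exists>xs. length xs = k \<and> set xs \<subseteq> I \<and> Idl\<^bsub>R\<^esub> (set xs) = I)"

definition minimal_basis :: "('a, 'c) ring_scheme \<Rightarrow> 'a list \<Rightarrow> bool" where
  "minimal_basis R xs \<longleftrightarrow> set xs \<subseteq> max_ideal R \<and> Idl\<^bsub>R\<^esub> (set xs) = max_ideal R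
      \<and> length xs = num_gens R (max_ideal R)"

definition basically_regular :: "('a, 'c) ring_scheme \<Rightarrow> ('b, 'd) ring_scheme \<Rightarrow> ('a \<Rightarrow> 'b) \<Rightarrow> bool" where
  "basically_regular A B \<phi> \<longleftrightarrow>
     (\<forall>xs. minimal_basis A xs \<longrightarrow> (\<exists>ys. minimal_basis B (map \<phi> xs @ ys)))"

text \<open>Vectors v 0, ..., v (k-1) in B^r are linearly independent modulo the maximal ideal n,
  i.e. their residues are L-linearly independent in L^r, L = B/n.\<close>
definition indep_mod :: "('b, 'd) ring_scheme \<Rightarrow> 'b set \<Rightarrow> nat \<Rightarrow> (nat \<Rightarrow> nat \<Rightarrow> 'b) \<Rightarrow> nat \<Rightarrow> bool" where
  "indep_mod B n r v k \<longleftrightarrow>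
     (\<forall>c. (\<forall>j<k. c j \<in> carrier B) \<and>
          (\<forall>i<r. (\<Oplus>\<^bsub>B\<^esub>j\<in>{..<k}. c j \<otimes>\<^bsub>B\<^esub> v j i) \<in> n)
          \<longrightarrow> (\<forall>j<k. c j \<in> n))"

text \<open>Kernel of m/m^2 \<otimes>_K L \<rightarrow> n/n^2, using the identification m/m^2 \<otimes>_K L = L^r given
  by a minimal basis x_1..x_r of m (a K-basis of m/m^2): preimage in B^r of the kernel.\<close>
definition rd_kernel :: "('a, 'c) ring_scheme \<Rightarrow> ('b, 'd) ring_scheme \<Rightarrow> ('a \<Rightarrow> 'b) \<Rightarrow> (nat \<Rightarrow> 'b) set" where
  "rd_kernel A B \<phi> =
     (let xs = (SOME xs. minimal_basis A xs); r = length xs in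
      {b. (\<forall>i<r. b i \<in> carrier B) \<and>
          (\<Oplus>\<^bsub>B\<^esub>i\<in>{..<r}. \<phi> (xs ! i) \<otimes>\<^bsub>B\<^esub> b i) \<in> ideal_sq B (max_ideal B)})"

text \<open>Regularity defect: the L-dimension of that kernel.\<close>
definition rd :: "('a, 'c) ring_scheme \<Rightarrow> ('b, 'd) ring_scheme \<Rightarrow> ('a \<Rightarrow> 'b) \<Rightarrow> nat" where
  "rd A B \<phi> =
     (let r = length (SOME xs. minimal_basis A xs) in
      (GREATEST k. \<exists>v. (\<forall>j<k. v j \<in> rd_kernel A B \<phi>) \<and> indep_mod B (max_ideal B) r v k))"

end

theory Submission
  imports Defs
begin

lemma ideal_zero_closed: "ideal I R \<Longrightarrow> \<zero>\<^bsub>R\<^esub> \<in> I"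
  by (metis additive_subgroup.zero_closed ideal.axioms(1))

lemma ideal_add_closed: "ideal I R \<Longrightarrow> a \<in> I \<Longrightarrow> b \<in> I \<Longrightarrow> a \<oplus>\<^bsub>R\<^esub> b \<in> I"
  by (metis additive_subgroup.a_closed ideal.axioms(1))

lemma (in ring) ideal_finsum_closed:
  assumes "ideal I R" "finite A" "\<And>i. i \<in> A \<Longrightarrow> f i \<in> I"
  shows "(\<Oplus>i\<in>A. f i) \<in> I"
  using assms(2,3)
proof (induction A rule: finite_induct)
  case empty
  then show ?case using ideal_zero_closed[OF assms(1)] by simp
next
  case (insert a A)
  then have "f \<in> insert a A \<rightarrow> carrier R" using ideal.Icarr[OF assms(1)] by blast
  then show ?case using insert ideal_add_closed[OF assms(1)] by (simp add: Pi_def)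
qed

lemma (in cring) exists_maximalideal_superset:
  assumes "ideal J R" and "\<one> \<notin> J"
  shows "\<exists>N. maximalideal N R \<and> J \<subseteq> N"
proof -
  define \<A> where "\<A> = {K. ideal K R \<and> J \<subseteq> K \<and> \<one> \<notin> K}"
  have "\<exists>N\<in>\<A>. \<forall>K\<in>\<A>. N \<subseteq> K \<longrightarrow> K = N"
  proof (rule subset_Zorn_nonempty)
    show "\<A> \<noteq> {}" using assms unfolding \<A>_def by blast
    fix \<C> assume "\<C> \<noteq> {}" and chain: "subset.chain \<A> \<C>"
    then have "subset.chain {I. ideal I R} \<C>"
      unfolding \<A>_def pred_on.chain_def by blast
    then have "ideal (\<Union>\<C>) R" using chain_Union_is_ideal[of \<C>] \<open>\<C> \<noteq> {}\<close> by simp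
    then show "\<Union>\<C> \<in> \<A>" using \<open>\<C> \<noteq> {}\<close> chain unfolding \<A>_def pred_on.chain_def by blast
  qed
  then obtain N where N: "N \<in> \<A>" and N_max: "\<And>K. K \<in> \<A> \<Longrightarrow> N \<subseteq> K \<Longrightarrow> K = N" by blast
  have "maximalideal N R"
  proof (rule maximalidealI)
    show "ideal N R" and "carrier R \<noteq> N" using N unfolding \<A>_def by auto
    fix K assume "ideal K R" "N \<subseteq> K" "K \<subseteq> carrier R"
    then show "K = N \<or> K = carrier R"
      using N N_max ideal.one_imp_carrier unfolding \<A>_def by blast
  qed
  then show ?thesis using N unfolding \<A>_def by blast
qed

context abelian_monoid
begin

lemma finsum_swap:
  assumes "finite A" "finite B" "\<And>i j. i \<in> A \<Longrightarrow> j \<in> B \<Longrightarrow> f i j \<in> carrier G"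
  shows "(\<Oplus>i\<in>A. \<Oplus>j\<in>B. f i j) = (\<Oplus>j\<in>B. \<Oplus>i\<in>A. f i j)"
  using assms
proof (induction A rule: finite_induct)
  case empty
  then show ?case by simp
next
  case (insert a A)
  then have "(\<Oplus>i\<in>insert a A. \<Oplus>j\<in>B. f i j) = (\<Oplus>j\<in>B. f a j) \<oplus> (\<Oplus>j\<in>B. \<Oplus>i\<in>A. f i j)"
    by (subst finsum_insert) (auto simp: Pi_def)
  also have "\<dots> = (\<Oplus>j\<in>B. f a j \<oplus> (\<Oplus>i\<in>A. f i j))"
    using insert.prems by (subst finsum_addf) (auto simp: Pi_def)
  also have "\<dots> = (\<Oplus>j\<in>B. \<Oplus>i\<in>insert a A. f i j)"
    using insert by (intro finsum_cong') (auto simp: Pi_def)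
  finally show ?case .
qed

lemma finsum_extend_zero:
  assumes "finite B" "A \<subseteq> B" "f \<in> B \<rightarrow> carrier G" "\<And>i. i \<in> B - A \<Longrightarrow> f i = \<zero>"
  shows "(\<Oplus>i\<in>B. f i) = (\<Oplus>i\<in>A. f i)"
  using add.finprod_mono_neutral_cong_left[of B A f f] assms by (simp add: Pi_def)

end

context ring
begin

lemma finsum_diff:
  assumes "finite A" "f \<in> A \<rightarrow> carrier R" "g \<in> A \<rightarrow> carrier R"
  shows "(\<Oplus>i\<in>A. f i \<ominus> g i) = (\<Oplus>i\<in>A. f i) \<ominus> (\<Oplus>i\<in>A. g i)"
proof -
  have "(\<Oplus>i\<in>A. f i \<ominus> g i) = (\<Oplus>i\<in>A. f i \<oplus> (\<ominus> \<one>) \<otimes> g i)"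
    using assms by (intro finsum_cong') (auto simp: a_minus_def l_minus Pi_def)
  also have "\<dots> = (\<Oplus>i\<in>A. f i) \<oplus> (\<ominus> \<one>) \<otimes> (\<Oplus>i\<in>A. g i)"
    using assms by (simp add: finsum_addf finsum_rdistr Pi_def)
  also have "\<dots> = (\<Oplus>i\<in>A. f i) \<ominus> (\<Oplus>i\<in>A. g i)"
    using assms by (simp add: a_minus_def l_minus)
  finally show ?thesis .
qed

lemma finsum_unit_coeff:
  assumes "i \<in> A" "finite A" "f \<in> A \<rightarrow> carrier R"
  shows "(\<Oplus>l\<in>A. f l \<otimes> (if l = i then \<one> else \<zero>)) = f i"
proof -
  have "(\<Oplus>l\<in>A. f l \<otimes> (if l = i then \<one> else \<zero>)) = (\<Oplus>l\<in>A. if i = l then f l else \<zero>)"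
    using assms by (intro finsum_cong') (auto simp: Pi_def)
  also have "\<dots> = f i" by (rule finsum_singleton[OF assms])
  finally show ?thesis .
qed

end

locale local_cring = cring R for R (structure) + fixes M
  assumes maximal: "maximalideal M R"
    and maximal_unique: "\<And>N. maximalideal N R \<Longrightarrow> N = M"
begin

lemma M_ideal: "ideal M R"
  using maximal maximalideal.axioms(1) by blast

lemma one_notin_M: "\<one> \<notin> M"
  using maximal ideal.one_imp_carrier[OF M_ideal] maximalideal.I_notcarr by metis

lemma M_closed: "x \<in> M \<Longrightarrow> x \<in> carrier R"
  using ideal.Icarr[OF M_ideal] .

lemma M_zero: "\<zero> \<in> M"
  using ideal_zero_closed[OF M_ideal] .

lemma M_add: "x \<in> M \<Longrightarrow> y \<in> M \<Longrightarrow> x \<oplus> y \<in> M"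
  using ideal_add_closed[OF M_ideal] .

lemma M_l_mult: "x \<in> M \<Longrightarrow> y \<in> carrier R \<Longrightarrow> y \<otimes> x \<in> M"
  using ideal.I_l_closed[OF M_ideal] .

lemma M_r_mult: "x \<in> M \<Longrightarrow> y \<in> carrier R \<Longrightarrow> x \<otimes> y \<in> M"
  using ideal.I_r_closed[OF M_ideal] .

lemma M_minus: "x \<in> M \<Longrightarrow> y \<in> M \<Longrightarrow> x \<ominus> y \<in> M"
  unfolding a_minus_def using M_add additive_subgroup.a_inv_closed[OF ideal.axioms(1)[OF M_ideal]] by blast

lemma proper_ideal_subset_M: "ideal J R \<Longrightarrow> \<one> \<notin> J \<Longrightarrow> J \<subseteq> M"
  using exists_maximalideal_superset maximal_unique by blast

lemma notin_M_invertible: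
  assumes "x \<in> carrier R" "x \<notin> M"
  obtains t where "t \<in> carrier R" "t \<otimes> x = \<one>"
proof (cases "\<one> \<in> PIdl x")
  case True
  then show ?thesis using that unfolding cgenideal_def by auto
next
  case False
  then have "PIdl x \<subseteq> M" using proper_ideal_subset_M cgenideal_ideal[OF assms(1)] by blast
  then show ?thesis using cgenideal_self[OF assms(1)] assms(2) by blast
qed

end

text \<open>Linear algebra over the residue field \<open>R/M\<close> is done on representatives: a vector
  of \<open>(R/M)\<^sup>r\<close> is a function \<open>nat \<Rightarrow> 'a\<close> read on \<open>{..<r}\<close>, and every linear
  relation is required to hold modulo \<open>M\<close> only.\<close>

definition is_vec :: "('a, 'c) ring_scheme \<Rightarrow> nat \<Rightarrow> (nat \<Rightarrow> 'a) \<Rightarrow> bool" where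
  "is_vec R r a \<longleftrightarrow> (\<forall>i<r. a i \<in> carrier R)"

definition indep_mod_on ::
    "('a, 'c) ring_scheme \<Rightarrow> 'a set \<Rightarrow> nat \<Rightarrow> (nat \<Rightarrow> nat \<Rightarrow> 'a) \<Rightarrow> nat set \<Rightarrow> bool" where
  "indep_mod_on R M r w J \<longleftrightarrow> (\<forall>c. (\<forall>j\<in>J. c j \<in> carrier R) \<and>
      (\<forall>i<r. (\<Oplus>\<^bsub>R\<^esub>j\<in>J. c j \<otimes>\<^bsub>R\<^esub> w j i) \<in> M) \<longrightarrow> (\<forall>j\<in>J. c j \<in> M))"

definition in_span_mod ::
    "('a, 'c) ring_scheme \<Rightarrow> 'a set \<Rightarrow> nat \<Rightarrow> nat set \<Rightarrow> (nat \<Rightarrow> nat \<Rightarrow> 'a) \<Rightarrow> (nat \<Rightarrow> 'a) \<Rightarrow> bool" where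
  "in_span_mod R M r L g a \<longleftrightarrow> (\<exists>\<beta>. (\<forall>l\<in>L. \<beta> l \<in> carrier R) \<and>
      (\<forall>i<r. a i \<ominus>\<^bsub>R\<^esub> (\<Oplus>\<^bsub>R\<^esub>l\<in>L. \<beta> l \<otimes>\<^bsub>R\<^esub> g l i) \<in> M))"

definition dim_mod :: "('a, 'c) ring_scheme \<Rightarrow> 'a set \<Rightarrow> nat \<Rightarrow> (nat \<Rightarrow> 'a) set \<Rightarrow> nat" where
  "dim_mod R M r P = (GREATEST k. \<exists>u. (\<forall>j<k. u j \<in> P) \<and> indep_mod R M r u k)"

definition unit_vec :: "('a, 'c) ring_scheme \<Rightarrow> nat \<Rightarrow> nat \<Rightarrow> 'a" where
  "unit_vec R l i = (if l = i then \<one>\<^bsub>R\<^esub> else \<zero>\<^bsub>R\<^esub>)"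

lemma indep_mod_iff_on: "indep_mod R M r u k \<longleftrightarrow> indep_mod_on R M r u {..<k}"
  unfolding indep_mod_def indep_mod_on_def by (simp add: Ball_def lessThan_iff)

lemma (in ring) is_vec_unit_vec: "is_vec R r (unit_vec R l)"
  unfolding is_vec_def unit_vec_def by simp

context local_cring
begin

lemma indep_mod_on_insert:
  assumes J: "finite J" "d \<notin> J" and w: "\<forall>j\<in>J. is_vec R r (w j)" and a: "is_vec R r a"
    and indep: "indep_mod_on R M r w J" and not_span: "\<not> in_span_mod R M r J w a"
  shows "indep_mod_on R M r (w(d := a)) (insert d J)"
  unfolding indep_mod_on_def
proof (intro allI impI)
  fix c assume c: "(\<forall>j\<in>insert d J. c j \<in> carrier R) \<and>
      (\<forall>i<r. (\<Oplus>j\<in>insert d J. c j \<otimes> (w(d := a)) j i) \<in> M)"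
  have cc: "\<And>j. j \<in> J \<Longrightarrow> c j \<in> carrier R" and cd: "c d \<in> carrier R" using c by auto
  have wc: "\<And>j i. j \<in> J \<Longrightarrow> i < r \<Longrightarrow> w j i \<in> carrier R" using w unfolding is_vec_def by blast
  have ac: "\<And>i. i < r \<Longrightarrow> a i \<in> carrier R" using a unfolding is_vec_def by blast
  define S where "S i = (\<Oplus>j\<in>J. c j \<otimes> w j i)" for i
  have Sc: "\<And>i. i < r \<Longrightarrow> S i \<in> carrier R" unfolding S_def using cc wc by (auto intro!: finsum_closed)
  have relation: "c d \<otimes> a i \<oplus> S i \<in> M" if i: "i < r" for i
  proof -
    have "(\<Oplus>j\<in>insert d J. c j \<otimes> (w(d := a)) j i) = c d \<otimes> a i \<oplus> (\<Oplus>j\<in>J. c j \<otimes> (w(d := a)) j i)"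
      using J cc cd wc ac i by (subst finsum_insert) (auto simp: Pi_def)
    also have "(\<Oplus>j\<in>J. c j \<otimes> (w(d := a)) j i) = S i"
      unfolding S_def using J cc wc i by (intro finsum_cong') (auto simp: Pi_def)
    finally have "(\<Oplus>j\<in>insert d J. c j \<otimes> (w(d := a)) j i) = c d \<otimes> a i \<oplus> S i" .
    moreover have "(\<Oplus>j\<in>insert d J. c j \<otimes> (w(d := a)) j i) \<in> M" using c i by blast
    ultimately show ?thesis by simp
  qed
  have cdM: "c d \<in> M"
  proof (rule ccontr)
    assume "c d \<notin> M"
    then obtain t where t: "t \<in> carrier R" "t \<otimes> c d = \<one>" using notin_M_invertible cd by blast
    have "in_span_mod R M r J w a"
      unfolding in_span_mod_def
    proof (intro exI[of _ "\<lambda>j. (\<ominus> t) \<otimes> c j"] conjI ballI allI impI)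
      show "(\<ominus> t) \<otimes> c j \<in> carrier R" if "j \<in> J" for j using that t cc by simp
      fix i assume i: "i < r"
      have "(\<Oplus>j\<in>J. (\<ominus> t) \<otimes> c j \<otimes> w j i) = (\<Oplus>j\<in>J. (\<ominus> t) \<otimes> (c j \<otimes> w j i))"
        using t cc wc i by (intro finsum_cong') (auto simp: Pi_def m_assoc)
      also have "\<dots> = (\<ominus> t) \<otimes> S i"
        unfolding S_def using t cc wc i J by (subst finsum_rdistr) (auto simp: Pi_def)
      finally have "(\<Oplus>j\<in>J. (\<ominus> t) \<otimes> c j \<otimes> w j i) = (\<ominus> t) \<otimes> S i" .
      moreover have "t \<otimes> (c d \<otimes> a i \<oplus> S i) = (t \<otimes> c d) \<otimes> a i \<oplus> t \<otimes> S i"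
        using t(1) ac[OF i] Sc[OF i] cd by algebra
      then have "a i \<ominus> (\<ominus> t) \<otimes> S i = t \<otimes> (c d \<otimes> a i \<oplus> S i)"
        using t ac[OF i] Sc[OF i] by (simp add: a_minus_def l_minus)
      ultimately show "a i \<ominus> (\<Oplus>j\<in>J. (\<ominus> t) \<otimes> c j \<otimes> w j i) \<in> M"
        using M_l_mult[OF relation[OF i] t(1)] by simp
    qed
    then show False using not_span by blast
  qed
  have "S i \<in> M" if i: "i < r" for i
  proof -
    have "S i = (c d \<otimes> a i \<oplus> S i) \<ominus> c d \<otimes> a i" using cd ac[OF i] Sc[OF i] by algebra
    then show ?thesis using M_minus[OF relation[OF i] M_r_mult[OF cdM ac[OF i]]] by simp
  qed
  then have "\<forall>j\<in>J. c j \<in> M" using indep cc unfolding indep_mod_on_def S_def by blast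
  then show "\<forall>j\<in>insert d J. c j \<in> M" using cdM by blast
qed


lemma in_span_mod_remove:
  assumes L: "finite L" "l0 \<notin> L" and g: "\<forall>l\<in>insert l0 L. is_vec R r (g l)" and a: "is_vec R r a"
    and a_span: "in_span_mod R M r (insert l0 L) g a" and g0_span: "in_span_mod R M r L g (g l0)"
  shows "in_span_mod R M r L g a"
proof -
  obtain \<beta> where \<beta>: "\<forall>l\<in>insert l0 L. \<beta> l \<in> carrier R"
      "\<forall>i<r. a i \<ominus> (\<Oplus>l\<in>insert l0 L. \<beta> l \<otimes> g l i) \<in> M"
    using a_span unfolding in_span_mod_def by blast
  obtain \<mu> where \<mu>: "\<forall>l\<in>L. \<mu> l \<in> carrier R" "\<forall>i<r. g l0 i \<ominus> (\<Oplus>l\<in>L. \<mu> l \<otimes> g l i) \<in> M"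
    using g0_span unfolding in_span_mod_def by blast
  have gc: "\<And>l i. l \<in> insert l0 L \<Longrightarrow> i < r \<Longrightarrow> g l i \<in> carrier R" using g unfolding is_vec_def by blast
  have ac: "\<And>i. i < r \<Longrightarrow> a i \<in> carrier R" using a unfolding is_vec_def by blast
  have b0: "\<beta> l0 \<in> carrier R" using \<beta> by blast
  show ?thesis
    unfolding in_span_mod_def
  proof (intro exI[of _ "\<lambda>l. \<beta> l \<oplus> \<beta> l0 \<otimes> \<mu> l"] conjI ballI allI impI)
    show "\<beta> l \<oplus> \<beta> l0 \<otimes> \<mu> l \<in> carrier R" if "l \<in> L" for l using that \<beta> \<mu> by blast
    fix i assume i: "i < r"
    define P where "P = (\<Oplus>l\<in>L. \<beta> l \<otimes> g l i)"
    define Q where "Q = (\<Oplus>l\<in>L. \<mu> l \<otimes> g l i)"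
    have PQ: "P \<in> carrier R" "Q \<in> carrier R" unfolding P_def Q_def using \<beta> \<mu> gc i by (auto intro!: finsum_closed)
    have split: "(\<Oplus>l\<in>insert l0 L. \<beta> l \<otimes> g l i) = \<beta> l0 \<otimes> g l0 i \<oplus> P"
      unfolding P_def using L \<beta> gc i by (subst finsum_insert) (auto simp: Pi_def)
    have "(\<Oplus>l\<in>L. (\<beta> l \<oplus> \<beta> l0 \<otimes> \<mu> l) \<otimes> g l i) = (\<Oplus>l\<in>L. \<beta> l \<otimes> g l i \<oplus> \<beta> l0 \<otimes> (\<mu> l \<otimes> g l i))"
      using \<beta> \<mu> gc i by (intro finsum_cong') (auto simp: Pi_def l_distr m_assoc)
    also have "\<dots> = P \<oplus> \<beta> l0 \<otimes> Q"
      unfolding P_def Q_def using \<beta> \<mu> gc i L by (simp add: finsum_addf finsum_rdistr Pi_def)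
    finally have combination: "(\<Oplus>l\<in>L. (\<beta> l \<oplus> \<beta> l0 \<otimes> \<mu> l) \<otimes> g l i) = P \<oplus> \<beta> l0 \<otimes> Q" .
    have "a i \<ominus> (P \<oplus> \<beta> l0 \<otimes> Q) = (a i \<ominus> (\<beta> l0 \<otimes> g l0 i \<oplus> P)) \<oplus> \<beta> l0 \<otimes> (g l0 i \<ominus> Q)"
      using ac[OF i] PQ b0 gc[OF insertI1 i] by algebra
    also have "\<dots> \<in> M"
      using M_add[OF \<beta>(2)[rule_format, OF i, unfolded split] M_l_mult[OF \<mu>(2)[rule_format, OF i, folded Q_def] b0]] .
    finally show "a i \<ominus> (\<Oplus>l\<in>L. (\<beta> l \<oplus> \<beta> l0 \<otimes> \<mu> l) \<otimes> g l i) \<in> M" unfolding combination .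
  qed
qed

lemma in_span_mod_insert_M_coeff:
  assumes L: "finite L" "l0 \<notin> L" and g: "\<forall>l\<in>insert l0 L. is_vec R r (g l)" and a: "is_vec R r a"
    and \<beta>: "\<forall>l\<in>insert l0 L. \<beta> l \<in> carrier R" "\<beta> l0 \<in> M"
    and rel: "\<forall>i<r. a i \<ominus> (\<Oplus>l\<in>insert l0 L. \<beta> l \<otimes> g l i) \<in> M"
  shows "in_span_mod R M r L g a"
  unfolding in_span_mod_def
proof (intro exI[of _ \<beta>] conjI ballI allI impI)
  show "\<beta> l \<in> carrier R" if "l \<in> L" for l using that \<beta> by blast
  fix i assume i: "i < r"
  have gc: "\<And>l. l \<in> insert l0 L \<Longrightarrow> g l i \<in> carrier R" using g i unfolding is_vec_def by blast
  define P where "P = (\<Oplus>l\<in>L. \<beta> l \<otimes> g l i)"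
  have Pc: "P \<in> carrier R" unfolding P_def using \<beta> gc by (auto intro!: finsum_closed)
  have split: "(\<Oplus>l\<in>insert l0 L. \<beta> l \<otimes> g l i) = \<beta> l0 \<otimes> g l0 i \<oplus> P"
    unfolding P_def using L \<beta> gc by (subst finsum_insert) (auto simp: Pi_def)
  have "a i \<in> carrier R" using a i unfolding is_vec_def by blast
  then have "a i \<ominus> P = (a i \<ominus> (\<beta> l0 \<otimes> g l0 i \<oplus> P)) \<oplus> \<beta> l0 \<otimes> g l0 i"
    using Pc bspec[OF \<beta>(1) insertI1] gc[OF insertI1] by algebra
  also have "\<dots> \<in> M" using M_add[OF rel[rule_format, OF i, unfolded split] M_r_mult[OF \<beta>(2) gc]] by simp
  finally show "a i \<ominus> (\<Oplus>l\<in>L. \<beta> l \<otimes> g l i) \<in> M" unfolding P_def .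
qed

lemma in_span_mod_eliminate:
  assumes L: "finite L" "l0 \<notin> L" and g: "\<forall>l\<in>insert l0 L. is_vec R r (g l)"
    and a: "is_vec R r a" and b: "is_vec R r b" and s: "s \<in> carrier R"
    and \<alpha>: "\<forall>l\<in>insert l0 L. \<alpha> l \<in> carrier R" "\<forall>i<r. a i \<ominus> (\<Oplus>l\<in>insert l0 L. \<alpha> l \<otimes> g l i) \<in> M"
    and \<beta>: "\<forall>l\<in>insert l0 L. \<beta> l \<in> carrier R" "\<forall>i<r. b i \<ominus> (\<Oplus>l\<in>insert l0 L. \<beta> l \<otimes> g l i) \<in> M"
    and pivot: "\<alpha> l0 = s \<otimes> \<beta> l0"
  shows "in_span_mod R M r L g (\<lambda>i. a i \<ominus> s \<otimes> b i)"
  unfolding in_span_mod_def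
proof (intro exI[of _ "\<lambda>l. \<alpha> l \<ominus> s \<otimes> \<beta> l"] conjI ballI allI impI)
  show "\<alpha> l \<ominus> s \<otimes> \<beta> l \<in> carrier R" if "l \<in> L" for l using that \<alpha> \<beta> s by blast
  fix i assume i: "i < r"
  have gc: "\<And>l. l \<in> insert l0 L \<Longrightarrow> g l i \<in> carrier R" using g i unfolding is_vec_def by blast
  have gcL: "\<And>l. l \<in> L \<Longrightarrow> g l i \<in> carrier R" using gc by blast
  have abc: "a i \<in> carrier R" "b i \<in> carrier R" using a b i unfolding is_vec_def by auto
  define P where "P = (\<Oplus>l\<in>L. \<alpha> l \<otimes> g l i)"
  define Q where "Q = (\<Oplus>l\<in>L. \<beta> l \<otimes> g l i)"
  have PQ: "P \<in> carrier R" "Q \<in> carrier R" unfolding P_def Q_def using \<alpha> \<beta> gc by (auto intro!: finsum_closed)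
  have split: "(\<Oplus>l\<in>insert l0 L. \<alpha> l \<otimes> g l i) = \<alpha> l0 \<otimes> g l0 i \<oplus> P"
    "(\<Oplus>l\<in>insert l0 L. \<beta> l \<otimes> g l i) = \<beta> l0 \<otimes> g l0 i \<oplus> Q"
    unfolding P_def Q_def using L \<alpha> \<beta> gc by (subst finsum_insert; auto simp: Pi_def)+
  have distr: "(x \<ominus> s \<otimes> y) \<otimes> z = x \<otimes> z \<ominus> s \<otimes> (y \<otimes> z)"
    if "x \<in> carrier R" "y \<in> carrier R" "z \<in> carrier R" for x y z
    using that s by algebra
  have "(\<Oplus>l\<in>L. (\<alpha> l \<ominus> s \<otimes> \<beta> l) \<otimes> g l i) = (\<Oplus>l\<in>L. \<alpha> l \<otimes> g l i \<ominus> s \<otimes> (\<beta> l \<otimes> g l i))"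
    using \<alpha> \<beta> s gcL by (intro finsum_cong') (auto simp: Pi_def distr)
  also have "\<dots> = P \<ominus> (\<Oplus>l\<in>L. s \<otimes> (\<beta> l \<otimes> g l i))"
    unfolding P_def using \<alpha> \<beta> s gcL L by (subst finsum_diff) (auto simp: Pi_def intro!: minus_closed)
  also have "(\<Oplus>l\<in>L. s \<otimes> (\<beta> l \<otimes> g l i)) = s \<otimes> Q"
    unfolding Q_def using \<beta> s gc L by (subst finsum_rdistr) (auto simp: Pi_def)
  finally have combination: "(\<Oplus>l\<in>L. (\<alpha> l \<ominus> s \<otimes> \<beta> l) \<otimes> g l i) = P \<ominus> s \<otimes> Q" .
  have "(a i \<ominus> s \<otimes> b i) \<ominus> (P \<ominus> s \<otimes> Q)
      = (a i \<ominus> (\<alpha> l0 \<otimes> g l0 i \<oplus> P)) \<ominus> s \<otimes> (b i \<ominus> (\<beta> l0 \<otimes> g l0 i \<oplus> Q))"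
    unfolding pivot using abc PQ s bspec[OF \<beta>(1) insertI1] gc[OF insertI1] by algebra
  also have "\<dots> \<in> M"
    using M_minus[OF \<alpha>(2)[rule_format, OF i] M_l_mult[OF \<beta>(2)[rule_format, OF i] s]] split by simp
  finally show "a i \<ominus> s \<otimes> b i \<ominus> (\<Oplus>l\<in>L. (\<alpha> l \<ominus> s \<otimes> \<beta> l) \<otimes> g l i) \<in> M"
    unfolding combination .
qed

lemma indep_mod_on_eliminate:
  assumes J: "finite J" "j0 \<notin> J" and w: "\<forall>j\<in>insert j0 J. is_vec R r (w j)"
    and s: "\<forall>j\<in>J. s j \<in> carrier R" and indep: "indep_mod_on R M r w (insert j0 J)"
  shows "indep_mod_on R M r (\<lambda>j i. w j i \<ominus> s j \<otimes> w j0 i) J"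
  unfolding indep_mod_on_def
proof (intro allI impI)
  fix c assume c: "(\<forall>j\<in>J. c j \<in> carrier R) \<and> (\<forall>i<r. (\<Oplus>j\<in>J. c j \<otimes> (w j i \<ominus> s j \<otimes> w j0 i)) \<in> M)"
  have cc: "\<And>j. j \<in> J \<Longrightarrow> c j \<in> carrier R" using c by blast
  have wc: "\<And>j i. j \<in> insert j0 J \<Longrightarrow> i < r \<Longrightarrow> w j i \<in> carrier R" using w unfolding is_vec_def by blast
  define K where "K = (\<Oplus>j\<in>J. c j \<otimes> s j)"
  have Kc: "K \<in> carrier R" unfolding K_def using cc s by (auto intro!: finsum_closed)
  define c' where "c' = c(j0 := \<ominus> K)"
  have c'c: "\<forall>j\<in>insert j0 J. c' j \<in> carrier R" unfolding c'_def using cc Kc by auto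
  have "(\<Oplus>j\<in>insert j0 J. c' j \<otimes> w j i) = (\<Oplus>j\<in>J. c j \<otimes> (w j i \<ominus> s j \<otimes> w j0 i))" if i: "i < r" for i
  proof -
    have S: "(\<Oplus>j\<in>J. c j \<otimes> w j i) \<in> carrier R" using cc wc i by (auto intro!: finsum_closed)
    have "(\<Oplus>j\<in>insert j0 J. c' j \<otimes> w j i) = (\<ominus> K) \<otimes> w j0 i \<oplus> (\<Oplus>j\<in>J. c' j \<otimes> w j i)"
      using J c'c wc i by (subst finsum_insert) (auto simp: Pi_def c'_def)
    also have "(\<Oplus>j\<in>J. c' j \<otimes> w j i) = (\<Oplus>j\<in>J. c j \<otimes> w j i)"
      unfolding c'_def using J cc wc i by (intro finsum_cong') (auto simp: Pi_def)
    also have "(\<ominus> K) \<otimes> w j0 i \<oplus> (\<Oplus>j\<in>J. c j \<otimes> w j i) = (\<Oplus>j\<in>J. c j \<otimes> w j i) \<ominus> K \<otimes> w j0 i"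
      using Kc S wc[OF insertI1 i] by (simp add: a_minus_def l_minus a_comm)
    also have "K \<otimes> w j0 i = (\<Oplus>j\<in>J. c j \<otimes> s j \<otimes> w j0 i)"
      unfolding K_def using J cc s wc[of j0 i] i by (subst finsum_ldistr) (auto simp: Pi_def)
    also have "(\<Oplus>j\<in>J. c j \<otimes> w j i) \<ominus> (\<Oplus>j\<in>J. c j \<otimes> s j \<otimes> w j0 i)
        = (\<Oplus>j\<in>J. c j \<otimes> w j i \<ominus> c j \<otimes> s j \<otimes> w j0 i)"
      using J cc s wc i by (subst finsum_diff) (auto simp: Pi_def)
    also have "\<dots> = (\<Oplus>j\<in>J. c j \<otimes> (w j i \<ominus> s j \<otimes> w j0 i))"
    proof (intro finsum_cong')
      fix j assume j: "j \<in> J"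
      then show "c j \<otimes> w j i \<ominus> c j \<otimes> s j \<otimes> w j0 i = c j \<otimes> (w j i \<ominus> s j \<otimes> w j0 i)"
        using cc[OF j] bspec[OF s j] wc[OF insertI2[OF j] i] wc[OF insertI1 i] by algebra
    qed (use cc s wc i in \<open>auto simp: Pi_def\<close>)
    finally show ?thesis .
  qed
  then have "\<forall>j\<in>insert j0 J. c' j \<in> M" using indep c c'c unfolding indep_mod_on_def by auto
  then show "\<forall>j\<in>J. c j \<in> M" using J(2) unfolding c'_def by (metis fun_upd_other insertCI)
qed

lemma indep_card_le_span_card:
  assumes "finite L" "finite J" "\<forall>j\<in>J. is_vec R r (w j)" "\<forall>l\<in>L. is_vec R r (g l)"
    and "indep_mod_on R M r w J" and "\<forall>j\<in>J. in_span_mod R M r L g (w j)"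
  shows "card J \<le> card L"
  using assms
proof (induction L arbitrary: J w rule: finite_induct)
  case empty
  show ?case
  proof (rule ccontr)
    assume "\<not> card J \<le> card {}"
    then have "J \<noteq> {}" by auto
    then obtain j0 where j0: "j0 \<in> J" by blast
    have "w j i \<in> M" if "j \<in> J" "i < r" for j i
    proof -
      have "w j i \<ominus> \<zero> \<in> M" using empty.prems(5) that unfolding in_span_mod_def by simp
      moreover have "w j i \<in> carrier R" using empty.prems(2) that unfolding is_vec_def by blast
      ultimately show ?thesis by (simp add: a_minus_def)
    qed
    then have "\<forall>i<r. (\<Oplus>j\<in>J. \<one> \<otimes> w j i) \<in> M"
      using ideal_finsum_closed[OF M_ideal empty.prems(1)] M_closed by simp
    then have "\<one> \<in> M" using empty.prems(4) j0 unfolding indep_mod_on_def by auto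
    then show False using one_notin_M by blast
  qed
next
  case (insert l0 L)
  have gL: "\<forall>l\<in>L. is_vec R r (g l)" using insert.prems(3) by blast
  obtain \<beta> where \<beta>: "\<forall>j\<in>J. (\<forall>l\<in>insert l0 L. \<beta> j l \<in> carrier R)
      \<and> (\<forall>i<r. w j i \<ominus> (\<Oplus>l\<in>insert l0 L. \<beta> j l \<otimes> g l i) \<in> M)"
    using bchoice[OF insert.prems(5)[unfolded in_span_mod_def]] by blast
  show ?case
  proof (cases "\<forall>j\<in>J. \<beta> j l0 \<in> M")
    case True
    have "\<forall>j\<in>J. in_span_mod R M r L g (w j)"
    proof
      fix j assume j: "j \<in> J"
      show "in_span_mod R M r L g (w j)"
        by (rule in_span_mod_insert_M_coeff[OF insert.hyps(1,2) insert.prems(3), where \<beta>="\<beta> j"])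
          (use \<beta> True insert.prems(2) j in blast)+
    qed
    then have "card J \<le> card L" using insert.IH[OF insert.prems(1,2) gL insert.prems(4)] by blast
    then show ?thesis using insert.hyps by simp
  next
    case False
    then obtain j0 where j0: "j0 \<in> J" "\<beta> j0 l0 \<notin> M" by blast
    moreover have \<beta>0: "\<beta> j0 l0 \<in> carrier R" using \<beta> j0 by blast
    ultimately obtain t where t: "t \<in> carrier R" "t \<otimes> \<beta> j0 l0 = \<one>" using notin_M_invertible by blast
    define J' where "J' = J - {j0}"
    have J': "finite J'" "j0 \<notin> J'" "J = insert j0 J'" unfolding J'_def using insert.prems(1) j0 by auto
    define s where "s j = \<beta> j l0 \<otimes> t" for j
    have s: "\<forall>j\<in>J. s j \<in> carrier R" unfolding s_def using \<beta> t by blast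
    have pivot: "\<beta> j l0 = s j \<otimes> \<beta> j0 l0" if "j \<in> J" for j
    proof -
      have "\<beta> j l0 \<in> carrier R" using \<beta> that by blast
      then show ?thesis unfolding s_def using \<beta>0 t by (simp add: m_assoc)
    qed
    define w' where "w' j i = w j i \<ominus> s j \<otimes> w j0 i" for j i
    have w'_vec: "\<forall>j\<in>J'. is_vec R r (w' j)"
      using insert.prems(2) s J' j0 unfolding w'_def is_vec_def by blast
    have w'_indep: "indep_mod_on R M r w' J'"
      unfolding w'_def
      by (rule indep_mod_on_eliminate[OF J'(1,2)]) (use J' s insert.prems(2,4) in simp_all)
    have w'_span: "\<forall>j\<in>J'. in_span_mod R M r L g (w' j)"
    proof
      fix j assume "j \<in> J'"
      then have j: "j \<in> J" using J' by blast
      show "in_span_mod R M r L g (w' j)" unfolding w'_def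
        by (rule in_span_mod_eliminate[OF insert.hyps(1,2) insert.prems(3), where \<alpha>="\<beta> j" and \<beta>="\<beta> j0"])
          (use \<beta> pivot[OF j] s insert.prems(2) j j0 in blast)+
    qed
    have "card J' \<le> card L" using insert.IH[OF J'(1) w'_vec gL w'_indep w'_span] .
    then show ?thesis using J' insert.hyps by simp
  qed
qed

lemma in_span_mod_unit_vecs:
  assumes "is_vec R r a"
  shows "in_span_mod R M r {..<r} (unit_vec R) a"
  unfolding in_span_mod_def
proof (intro exI[of _ a] conjI ballI allI impI)
  show "a l \<in> carrier R" if "l \<in> {..<r}" for l using assms that unfolding is_vec_def by auto
  fix i assume i: "i < r"
  have "(\<Oplus>l\<in>{..<r}. a l \<otimes> unit_vec R l i) = a i"
    unfolding unit_vec_def using finsum_unit_coeff[of i "{..<r}" a] assms i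
    unfolding is_vec_def by (auto simp: Pi_def)
  then show "a i \<ominus> (\<Oplus>l\<in>{..<r}. a l \<otimes> unit_vec R l i) \<in> M"
    using assms i M_zero unfolding is_vec_def by (simp add: r_neg a_minus_def)
qed

lemma indep_mod_unit_vecs:
  assumes "k \<le> r"
  shows "indep_mod R M r (unit_vec R) k"
  unfolding indep_mod_def
proof (intro allI impI)
  fix c j assume c: "(\<forall>j<k. c j \<in> carrier R) \<and> (\<forall>i<r. (\<Oplus>j\<in>{..<k}. c j \<otimes> unit_vec R j i) \<in> M)"
    and j: "j < k"
  have "(\<Oplus>l\<in>{..<k}. c l \<otimes> unit_vec R l j) = c j"
    unfolding unit_vec_def using finsum_unit_coeff[of j "{..<k}" c] c j by (auto simp: Pi_def)
  then show "c j \<in> M" using c j assms by (metis order_less_le_trans)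
qed

lemma indep_card_le:
  assumes "finite J" "\<forall>j\<in>J. is_vec R r (w j)" "indep_mod_on R M r w J"
  shows "card J \<le> r"
  using indep_card_le_span_card[of "{..<r}" J r w "unit_vec R"] assms
    is_vec_unit_vec in_span_mod_unit_vecs by simp

lemma indep_mod_le:
  assumes "\<forall>j<k. is_vec R r (u j)" "indep_mod R M r u k"
  shows "k \<le> r"
  using indep_card_le[of "{..<k}" r u] assms unfolding indep_mod_iff_on by simp

lemma dim_mod_witness:
  assumes "P \<subseteq> {a. is_vec R r a}"
  obtains u where "\<forall>j<dim_mod R M r P. u j \<in> P" "indep_mod R M r u (dim_mod R M r P)"
proof -
  have "\<exists>u. (\<forall>j<0. u j \<in> P) \<and> indep_mod R M r u 0" unfolding indep_mod_def by simp
  then have "\<exists>u. (\<forall>j<dim_mod R M r P. u j \<in> P) \<and> indep_mod R M r u (dim_mod R M r P)"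
    unfolding dim_mod_def by (rule GreatestI_nat) (use assms indep_mod_le in blast)
  then show ?thesis using that by blast
qed

lemma dim_mod_ge:
  assumes "P \<subseteq> {a. is_vec R r a}" "\<forall>j<k. u j \<in> P" "indep_mod R M r u k"
  shows "k \<le> dim_mod R M r P"
  unfolding dim_mod_def by (rule Greatest_le_nat[where b=r]) (use assms indep_mod_le in blast)+

lemma dim_mod_le:
  assumes "P \<subseteq> {a. is_vec R r a}"
  shows "dim_mod R M r P \<le> r"
  by (metis assms dim_mod_witness indep_mod_le mem_Collect_eq subsetD)

lemma in_span_mod_dim_basis:
  assumes P: "P \<subseteq> {a. is_vec R r a}"
    and u: "\<forall>j<dim_mod R M r P. u j \<in> P" "indep_mod R M r u (dim_mod R M r P)"
    and a: "a \<in> P"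
  shows "in_span_mod R M r {..<dim_mod R M r P} u a"
proof (rule ccontr)
  define d where "d = dim_mod R M r P"
  assume "\<not> in_span_mod R M r {..<dim_mod R M r P} u a"
  then have "indep_mod_on R M r (u(d := a)) (insert d {..<d})"
    by (intro indep_mod_on_insert) (use u a P in \<open>auto simp: d_def indep_mod_iff_on\<close>)
  then have "indep_mod R M r (u(d := a)) (Suc d)" unfolding indep_mod_iff_on lessThan_Suc .
  moreover have "\<forall>j<Suc d. (u(d := a)) j \<in> P" using u a unfolding d_def by auto
  ultimately have "Suc d \<le> d" using dim_mod_ge[OF P] unfolding d_def by blast
  then show False by simp
qed

lemma dim_mod_le_span_card:
  assumes P: "P \<subseteq> {a. is_vec R r a}" and L: "finite L" "\<forall>l\<in>L. is_vec R r (g l)"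
    and span: "\<forall>a\<in>P. in_span_mod R M r L g a"
  shows "dim_mod R M r P \<le> card L"
proof -
  obtain u where u: "\<forall>j<dim_mod R M r P. u j \<in> P" "indep_mod R M r u (dim_mod R M r P)"
    using dim_mod_witness[OF P] by blast
  have "card {..<dim_mod R M r P} \<le> card L"
    by (rule indep_card_le_span_card[OF L(1)]) (use u P L span in \<open>auto simp: indep_mod_iff_on\<close>)
  then show ?thesis by simp
qed

lemma in_span_mod_full_indep:
  assumes u: "\<forall>j<r. is_vec R r (u j)" "indep_mod R M r u r" and a: "is_vec R r a"
  shows "in_span_mod R M r {..<r} u a"
proof (rule ccontr)
  assume "\<not> in_span_mod R M r {..<r} u a"
  then have "indep_mod_on R M r (u(r := a)) (insert r {..<r})"
    by (intro indep_mod_on_insert) (use u a in \<open>auto simp: indep_mod_iff_on\<close>)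
  then have "card (insert r {..<r}) \<le> r"
    by (intro indep_card_le) (use u a in auto)
  then show False by simp
qed

lemma indep_mod_extend:
  assumes u: "\<forall>j<d. is_vec R r (u j)" "indep_mod R M r u d" and "d \<le> k" "k \<le> r"
  obtains u' where "\<forall>j<d. u' j = u j" "\<forall>j<k. is_vec R r (u' j)" "indep_mod R M r u' k"
proof -
  have "\<exists>u'. (\<forall>j<d. u' j = u j) \<and> (\<forall>j<k. is_vec R r (u' j)) \<and> indep_mod R M r u' k"
    using \<open>d \<le> k\<close> \<open>k \<le> r\<close>
  proof (induction k rule: dec_induct)
    case base
    then show ?case using u by blast
  next
    case (step n)
    then obtain u' where u': "\<forall>j<d. u' j = u j" "\<forall>j<n. is_vec R r (u' j)" "indep_mod R M r u' n"
      by auto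
    have "\<exists>l<r. \<not> in_span_mod R M r {..<n} u' (unit_vec R l)"
    proof (rule ccontr)
      assume "\<not> (\<exists>l<r. \<not> in_span_mod R M r {..<n} u' (unit_vec R l))"
      then have "card {..<r} \<le> card {..<n}"
        by (intro indep_card_le_span_card[where w="unit_vec R" and g=u'])
          (use u' is_vec_unit_vec indep_mod_unit_vecs[of r r] in \<open>auto simp: indep_mod_iff_on\<close>)
      then show False using step by simp
    qed
    then obtain l where l: "l < r" "\<not> in_span_mod R M r {..<n} u' (unit_vec R l)" by blast
    have "indep_mod_on R M r (u'(n := unit_vec R l)) (insert n {..<n})"
      by (rule indep_mod_on_insert) (use l u' is_vec_unit_vec in \<open>auto simp: indep_mod_iff_on\<close>)
    then have "indep_mod R M r (u'(n := unit_vec R l)) (Suc n)"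
      unfolding indep_mod_iff_on lessThan_Suc .
    moreover have "\<forall>j<d. (u'(n := unit_vec R l)) j = u j" using u' step by auto
    moreover have "\<forall>j<Suc n. is_vec R r ((u'(n := unit_vec R l)) j)" using u' is_vec_unit_vec by auto
    ultimately show ?case by blast
  qed
  then show ?thesis using that by blast
qed

lemma dependent_in_span_mod_others:
  assumes L: "finite L" and g: "\<forall>l\<in>L. is_vec R r (g l)" and dep: "\<not> indep_mod_on R M r g L"
  obtains l0 where "l0 \<in> L" "in_span_mod R M r (L - {l0}) g (g l0)"
proof -
  obtain c where c: "\<forall>l\<in>L. c l \<in> carrier R" "\<forall>i<r. (\<Oplus>l\<in>L. c l \<otimes> g l i) \<in> M" "\<exists>l\<in>L. c l \<notin> M"
    using dep unfolding indep_mod_on_def by blast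
  then obtain l0 where l0: "l0 \<in> L" "c l0 \<notin> M" by blast
  have gc: "\<And>l i. l \<in> L \<Longrightarrow> i < r \<Longrightarrow> g l i \<in> carrier R" using g unfolding is_vec_def by blast
  have c0: "c l0 \<in> carrier R" using c l0 by blast
  obtain t where t: "t \<in> carrier R" "t \<otimes> c l0 = \<one>" using notin_M_invertible[OF c0 l0(2)] by blast
  define L' where "L' = L - {l0}"
  have L': "L = insert l0 L'" "l0 \<notin> L'" "finite L'" unfolding L'_def using l0 L by auto
  have "in_span_mod R M r L' g (g l0)"
    unfolding in_span_mod_def
  proof (intro exI[of _ "\<lambda>l. (\<ominus> t) \<otimes> c l"] conjI ballI allI impI)
    show "(\<ominus> t) \<otimes> c l \<in> carrier R" if "l \<in> L'" for l using that t c L' by blast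
    fix i assume i: "i < r"
    define S where "S = (\<Oplus>l\<in>L'. c l \<otimes> g l i)"
    have Sc: "S \<in> carrier R" unfolding S_def using c gc i L' by (auto intro!: finsum_closed)
    have "(\<Oplus>l\<in>L'. (\<ominus> t) \<otimes> c l \<otimes> g l i) = (\<Oplus>l\<in>L'. (\<ominus> t) \<otimes> (c l \<otimes> g l i))"
      using t c gc i L' by (intro finsum_cong') (auto simp: Pi_def m_assoc)
    also have "\<dots> = (\<ominus> t) \<otimes> S"
      unfolding S_def using t c gc i L' by (subst finsum_rdistr) (auto simp: Pi_def)
    finally have combination: "(\<Oplus>l\<in>L'. (\<ominus> t) \<otimes> c l \<otimes> g l i) = (\<ominus> t) \<otimes> S" .
    have "(\<Oplus>l\<in>L. c l \<otimes> g l i) \<in> M" using c(2) i by blast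
    moreover have "(\<Oplus>l\<in>L. c l \<otimes> g l i) = c l0 \<otimes> g l0 i \<oplus> S"
      unfolding S_def L'(1) using L' c gc i by (subst finsum_insert) (auto simp: Pi_def)
    ultimately have relation: "c l0 \<otimes> g l0 i \<oplus> S \<in> M" by simp
    have "t \<otimes> (c l0 \<otimes> g l0 i \<oplus> S) = (t \<otimes> c l0) \<otimes> g l0 i \<oplus> t \<otimes> S"
      using t(1) c0 gc[OF l0(1) i] Sc by algebra
    then have "g l0 i \<ominus> (\<ominus> t) \<otimes> S = t \<otimes> (c l0 \<otimes> g l0 i \<oplus> S)"
      using t gc[OF l0(1) i] Sc by (simp add: a_minus_def l_minus)
    then show "g l0 i \<ominus> (\<Oplus>l\<in>L'. (\<ominus> t) \<otimes> c l \<otimes> g l i) \<in> M"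
      unfolding combination using M_l_mult[OF relation t(1)] by simp
  qed
  then show ?thesis using that l0 unfolding L'_def by blast
qed

lemma dim_mod_less_card_if_dependent:
  assumes P: "P \<subseteq> {a. is_vec R r a}" and L: "finite L" and g: "\<forall>l\<in>L. is_vec R r (g l)"
    and dep: "\<not> indep_mod_on R M r g L" and span: "\<forall>a\<in>P. in_span_mod R M r L g a"
  shows "dim_mod R M r P < card L"
proof -
  obtain l0 where l0: "l0 \<in> L" "in_span_mod R M r (L - {l0}) g (g l0)"
    using dependent_in_span_mod_others[OF L g dep] by blast
  have "L = insert l0 (L - {l0})" using l0 by blast
  then have "\<forall>a\<in>P. in_span_mod R M r (L - {l0}) g a"
    using in_span_mod_remove[of "L - {l0}" l0 r g] L g P l0 span by auto
  then have "dim_mod R M r P \<le> card (L - {l0})"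
    by (intro dim_mod_le_span_card[OF P]) (use L g in auto)
  then show ?thesis using l0 L card_Diff1_less by fastforce
qed

end

lemma (in cring) ideal_criterion:
  assumes "I \<subseteq> carrier R" "\<zero> \<in> I"
    and "\<And>a b. a \<in> I \<Longrightarrow> b \<in> I \<Longrightarrow> a \<oplus> b \<in> I"
    and "\<And>a x. a \<in> I \<Longrightarrow> x \<in> carrier R \<Longrightarrow> x \<otimes> a \<in> I"
  shows "ideal I R"
proof (rule idealI)
  show "ring R" by (rule ring_axioms)
  show "subgroup I (add_monoid R)"
  proof
    fix a assume a: "a \<in> I"
    have "\<ominus> a = (\<ominus> \<one>) \<otimes> a" using a assms(1) by (simp add: l_minus subsetD)
    then show "inv\<^bsub>add_monoid R\<^esub> a \<in> I" using assms(4)[OF a, of "\<ominus> \<one>"] by (simp add: a_inv_def)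
  qed (use assms in auto)
  show "\<And>a x. a \<in> I \<Longrightarrow> x \<in> carrier R \<Longrightarrow> x \<otimes> a \<in> I" by (rule assms(4))
  show "\<And>a x. a \<in> I \<Longrightarrow> x \<in> carrier R \<Longrightarrow> a \<otimes> x \<in> I"
    using assms(1,4) m_comm by (metis subsetD)
qed

lemma nth_in_subset [simp]: "set ys \<subseteq> S \<Longrightarrow> i < length ys \<Longrightarrow> ys ! i \<in> S"
  by (meson nth_mem subsetD)

context ring
begin

lemma ideal_sq_ideal: "I \<subseteq> carrier R \<Longrightarrow> ideal (ideal_sq R I) R"
  unfolding ideal_sq_def by (rule genideal_ideal) auto

lemma ideal_sq_mult: "I \<subseteq> carrier R \<Longrightarrow> a \<in> I \<Longrightarrow> b \<in> I \<Longrightarrow> a \<otimes> b \<in> ideal_sq R I"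
  unfolding ideal_sq_def by (rule subsetD[OF genideal_self]) auto

lemma ideal_sq_subset: "ideal I R \<Longrightarrow> ideal_sq R I \<subseteq> I"
  unfolding ideal_sq_def by (rule genideal_minimal) (auto intro: ideal.I_r_closed ideal.Icarr)

definition lincomb :: "'a list \<Rightarrow> (nat \<Rightarrow> 'a) \<Rightarrow> 'a" where
  "lincomb ys e = (\<Oplus>i\<in>{..<length ys}. ys ! i \<otimes> e i)"

lemma lincomb_closed:
  "set ys \<subseteq> carrier R \<Longrightarrow> (\<And>i. i < length ys \<Longrightarrow> e i \<in> carrier R) \<Longrightarrow> lincomb ys e \<in> carrier R"
  unfolding lincomb_def by (auto intro!: finsum_closed)

lemma lincomb_in_ideal:
  "ideal I R \<Longrightarrow> set ys \<subseteq> I \<Longrightarrow> (\<And>i. i < length ys \<Longrightarrow> e i \<in> carrier R) \<Longrightarrow> lincomb ys e \<in> I"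
  unfolding lincomb_def by (rule ideal_finsum_closed) (auto intro: ideal.I_r_closed)

lemma lincomb_coeffs_in_ideal:
  "ideal I R \<Longrightarrow> set ys \<subseteq> carrier R \<Longrightarrow> (\<And>i. i < length ys \<Longrightarrow> e i \<in> I) \<Longrightarrow> lincomb ys e \<in> I"
  unfolding lincomb_def by (rule ideal_finsum_closed) (auto intro: ideal.I_l_closed)

lemma lincomb_in_ideal_sq:
  assumes "ideal I R" "set ys \<subseteq> I" "\<And>i. i < length ys \<Longrightarrow> e i \<in> I"
  shows "lincomb ys e \<in> ideal_sq R I"
proof -
  have "I \<subseteq> carrier R" using ideal.Icarr[OF assms(1)] by blast
  then show ?thesis unfolding lincomb_def
    by (intro ideal_finsum_closed[OF ideal_sq_ideal]) (use assms in \<open>auto intro: ideal_sq_mult\<close>)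
qed

lemma lincomb_cong:
  "set ys \<subseteq> carrier R \<Longrightarrow> (\<And>i. i < length ys \<Longrightarrow> e' i \<in> carrier R) \<Longrightarrow>
    (\<And>i. i < length ys \<Longrightarrow> e i = e' i) \<Longrightarrow> lincomb ys e = lincomb ys e'"
  unfolding lincomb_def by (intro finsum_cong) (auto simp: Pi_def)

end

context cring
begin

lemma lincomb_add:
  assumes "set ys \<subseteq> carrier R" "\<And>i. i < length ys \<Longrightarrow> e i \<in> carrier R"
    "\<And>i. i < length ys \<Longrightarrow> e' i \<in> carrier R"
  shows "lincomb ys e \<oplus> lincomb ys e' = lincomb ys (\<lambda>i. e i \<oplus> e' i)"
proof -
  have "lincomb ys e \<oplus> lincomb ys e' = (\<Oplus>i\<in>{..<length ys}. ys ! i \<otimes> e i \<oplus> ys ! i \<otimes> e' i)"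
    unfolding lincomb_def using assms by (subst finsum_addf) (auto simp: Pi_def)
  also have "\<dots> = lincomb ys (\<lambda>i. e i \<oplus> e' i)"
    unfolding lincomb_def using assms by (intro finsum_cong') (auto simp: Pi_def r_distr)
  finally show ?thesis .
qed

lemma lincomb_diff:
  assumes "set ys \<subseteq> carrier R" "\<And>i. i < length ys \<Longrightarrow> e i \<in> carrier R"
    "\<And>i. i < length ys \<Longrightarrow> e' i \<in> carrier R"
  shows "lincomb ys e \<ominus> lincomb ys e' = lincomb ys (\<lambda>i. e i \<ominus> e' i)"
proof -
  have "lincomb ys e \<ominus> lincomb ys e' = (\<Oplus>i\<in>{..<length ys}. ys ! i \<otimes> e i \<ominus> ys ! i \<otimes> e' i)"
    unfolding lincomb_def using assms by (subst finsum_diff) (auto simp: Pi_def)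
  also have "\<dots> = lincomb ys (\<lambda>i. e i \<ominus> e' i)"
    unfolding lincomb_def using assms by (intro finsum_cong') (auto simp: Pi_def r_minus a_minus_def r_distr)
  finally show ?thesis .
qed

lemma lincomb_smult:
  assumes "set ys \<subseteq> carrier R" "\<And>i. i < length ys \<Longrightarrow> e i \<in> carrier R" "x \<in> carrier R"
  shows "x \<otimes> lincomb ys e = lincomb ys (\<lambda>i. x \<otimes> e i)"
proof -
  have "x \<otimes> lincomb ys e = (\<Oplus>i\<in>{..<length ys}. x \<otimes> (ys ! i \<otimes> e i))"
    unfolding lincomb_def using assms by (subst finsum_rdistr) (auto simp: Pi_def)
  also have "\<dots> = lincomb ys (\<lambda>i. x \<otimes> e i)"
    unfolding lincomb_def using assms by (intro finsum_cong') (auto simp: Pi_def m_lcomm)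
  finally show ?thesis .
qed

lemma lincomb_unit_vec:
  assumes "set ys \<subseteq> carrier R" "k < length ys"
  shows "lincomb ys (unit_vec R k) = ys ! k"
proof -
  have "lincomb ys (unit_vec R k) = (\<Oplus>i\<in>{..<length ys}. if k = i then ys ! i else \<zero>)"
    unfolding lincomb_def unit_vec_def using assms by (intro finsum_cong') auto
  also have "\<dots> = ys ! k" using assms by (intro finsum_singleton) auto
  finally show ?thesis .
qed

lemma lincomb_Cons:
  assumes "set (y # ys) \<subseteq> carrier R" "\<And>i. i < Suc (length ys) \<Longrightarrow> e i \<in> carrier R"
  shows "lincomb (y # ys) e = y \<otimes> e 0 \<oplus> lincomb ys (\<lambda>i. e (Suc i))"
proof -
  have "lincomb (y # ys) e = (\<Oplus>i\<in>insert 0 (Suc ` {..<length ys}). (y # ys) ! i \<otimes> e i)"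
    unfolding lincomb_def by (simp add: lessThan_Suc_eq_insert_0)
  also have "\<dots> = y \<otimes> e 0 \<oplus> (\<Oplus>i\<in>Suc ` {..<length ys}. (y # ys) ! i \<otimes> e i)"
    using assms by (subst finsum_insert) (auto simp: Pi_def)
  also have "(\<Oplus>i\<in>Suc ` {..<length ys}. (y # ys) ! i \<otimes> e i) = lincomb ys (\<lambda>i. e (Suc i))"
    unfolding lincomb_def using assms by (subst finsum_reindex) (auto simp: Pi_def)
  finally show ?thesis .
qed

lemma lincomb_finsum:
  assumes L: "finite L" and ys: "set ys \<subseteq> carrier R" and \<beta>: "\<And>l. l \<in> L \<Longrightarrow> \<beta> l \<in> carrier R"
    and \<gamma>: "\<And>l j. l \<in> L \<Longrightarrow> j < length ys \<Longrightarrow> \<gamma> l j \<in> carrier R"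
  shows "(\<Oplus>l\<in>L. \<beta> l \<otimes> lincomb ys (\<gamma> l)) = lincomb ys (\<lambda>j. \<Oplus>l\<in>L. \<beta> l \<otimes> \<gamma> l j)"
proof -
  have "(\<Oplus>l\<in>L. \<beta> l \<otimes> lincomb ys (\<gamma> l)) = (\<Oplus>l\<in>L. \<Oplus>j\<in>{..<length ys}. ys ! j \<otimes> (\<beta> l \<otimes> \<gamma> l j))"
    using lincomb_smult[OF ys] \<beta> \<gamma> ys unfolding lincomb_def
    by (intro finsum_cong') (auto simp: Pi_def intro!: finsum_closed)
  also have "\<dots> = (\<Oplus>j\<in>{..<length ys}. \<Oplus>l\<in>L. ys ! j \<otimes> (\<beta> l \<otimes> \<gamma> l j))"
    by (rule finsum_swap) (use L ys \<beta> \<gamma> in auto)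
  also have "\<dots> = lincomb ys (\<lambda>j. \<Oplus>l\<in>L. \<beta> l \<otimes> \<gamma> l j)"
    unfolding lincomb_def using L ys \<beta> \<gamma>
    by (intro finsum_cong') (auto simp: Pi_def finsum_rdistr intro!: finsum_closed)
  finally show ?thesis .
qed

lemma genideal_eq_lincombs:
  assumes ys: "set ys \<subseteq> carrier R"
  shows "Idl (set ys) = {lincomb ys e | e. \<forall>i<length ys. e i \<in> carrier R}"
    (is "_ = ?T")
proof
  have "ideal ?T R"
  proof (rule ideal_criterion)
    show "?T \<subseteq> carrier R" using lincomb_closed[OF ys] by blast
    have "lincomb ys (\<lambda>_. \<zero>) = (\<Oplus>i\<in>{..<length ys}. \<zero>)"
      unfolding lincomb_def using ys by (intro finsum_cong') auto
    then have "lincomb ys (\<lambda>_. \<zero>) = \<zero>" by simp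
    moreover have "\<forall>i<length ys. \<zero> \<in> carrier R" by simp
    ultimately show "\<zero> \<in> ?T" unfolding mem_Collect_eq by (intro exI[of _ "\<lambda>_. \<zero>"]) simp
    show "a \<oplus> b \<in> ?T" if ab: "a \<in> ?T" "b \<in> ?T" for a b
    proof -
      obtain e e' where e: "a = lincomb ys e" "\<forall>i<length ys. e i \<in> carrier R"
        and e': "b = lincomb ys e'" "\<forall>i<length ys. e' i \<in> carrier R"
        using ab by blast
      then have "a \<oplus> b = lincomb ys (\<lambda>i. e i \<oplus> e' i)" using lincomb_add[OF ys] by simp
      moreover have "\<forall>i<length ys. e i \<oplus> e' i \<in> carrier R" using e e' by simp
      ultimately show ?thesis unfolding mem_Collect_eq by (intro exI[of _ "\<lambda>i. e i \<oplus> e' i"]) simp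
    qed
    show "x \<otimes> a \<in> ?T" if ax: "a \<in> ?T" "x \<in> carrier R" for a x
    proof -
      obtain e where e: "a = lincomb ys e" "\<forall>i<length ys. e i \<in> carrier R" using ax by blast
      then have "x \<otimes> a = lincomb ys (\<lambda>i. x \<otimes> e i)" using lincomb_smult[OF ys] ax(2) by simp
      moreover have "\<forall>i<length ys. x \<otimes> e i \<in> carrier R" using e ax(2) by simp
      ultimately show ?thesis unfolding mem_Collect_eq by (intro exI[of _ "\<lambda>i. x \<otimes> e i"]) simp
    qed
  qed
  moreover have "set ys \<subseteq> ?T"
  proof
    fix y assume "y \<in> set ys"
    then obtain k where "k < length ys" "y = ys ! k" by (auto simp: in_set_conv_nth)
    then have "y = lincomb ys (unit_vec R k) \<and> (\<forall>i<length ys. unit_vec R k i \<in> carrier R)"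
      using lincomb_unit_vec[OF ys] unfolding unit_vec_def by simp
    then show "y \<in> ?T" by blast
  qed
  ultimately show "Idl (set ys) \<subseteq> ?T" using genideal_minimal by blast
  show "?T \<subseteq> Idl (set ys)"
    using lincomb_in_ideal[OF genideal_ideal[OF ys] genideal_self[OF ys]] by blast
qed

end

lemma (in cring) genideal_plus_congruent_combination:
  fixes d :: nat
  assumes N: "ideal N R" and G: "\<forall>l<d. G l \<in> carrier R" and Gen: "Gen \<subseteq> carrier R"
    and gens: "\<forall>x\<in>Gen. \<exists>\<beta>. (\<forall>l<d. \<beta> l \<in> carrier R) \<and> x \<ominus> (\<Oplus>l\<in>{..<d}. \<beta> l \<otimes> G l) \<in> N"
    and x: "x \<in> Idl Gen <+>\<^bsub>R\<^esub> N"
  obtains \<beta> where "\<forall>l<d. \<beta> l \<in> carrier R" "x \<ominus> (\<Oplus>l\<in>{..<d}. \<beta> l \<otimes> G l) \<in> N"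
proof -
  define S where "S \<beta> = (\<Oplus>l\<in>{..<d}. \<beta> l \<otimes> G l)" for \<beta>
  have Sc: "S \<beta> \<in> carrier R" if "\<forall>l<d. \<beta> l \<in> carrier R" for \<beta>
    unfolding S_def using that G by (auto intro!: finsum_closed)
  have S_add: "S (\<lambda>l. \<beta>1 l \<oplus> \<beta>2 l) = S \<beta>1 \<oplus> S \<beta>2"
    if "\<forall>l<d. \<beta>1 l \<in> carrier R" "\<forall>l<d. \<beta>2 l \<in> carrier R" for \<beta>1 \<beta>2
  proof -
    have "S (\<lambda>l. \<beta>1 l \<oplus> \<beta>2 l) = (\<Oplus>l\<in>{..<d}. \<beta>1 l \<otimes> G l \<oplus> \<beta>2 l \<otimes> G l)"
      unfolding S_def using that G by (intro finsum_cong') (auto simp: l_distr)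
    also have "\<dots> = S \<beta>1 \<oplus> S \<beta>2" unfolding S_def using that G by (subst finsum_addf) auto
    finally show ?thesis .
  qed
  have S_smult: "S (\<lambda>l. y \<otimes> \<beta> l) = y \<otimes> S \<beta>"
    if "\<forall>l<d. \<beta> l \<in> carrier R" "y \<in> carrier R" for \<beta> y
  proof -
    have "S (\<lambda>l. y \<otimes> \<beta> l) = (\<Oplus>l\<in>{..<d}. y \<otimes> (\<beta> l \<otimes> G l))"
      unfolding S_def using that G by (intro finsum_cong') (auto simp: m_assoc)
    also have "\<dots> = y \<otimes> S \<beta>" unfolding S_def using that G by (subst finsum_rdistr) auto
    finally show ?thesis .
  qed
  define E where "E = {e \<in> carrier R. \<exists>\<beta>. (\<forall>l<d. \<beta> l \<in> carrier R) \<and> e \<ominus> S \<beta> \<in> N}"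
  have NE: "N \<subseteq> E"
  proof
    fix y assume y: "y \<in> N"
    have "S (\<lambda>_. \<zero>) = (\<Oplus>l\<in>{..<d}. \<zero>)" unfolding S_def using G by (intro finsum_cong') auto
    then have "S (\<lambda>_. \<zero>) = \<zero>" by simp
    then have "y \<ominus> S (\<lambda>_. \<zero>) \<in> N" using y ideal.Icarr[OF N y] by (simp add: a_minus_def)
    then show "y \<in> E" unfolding E_def using ideal.Icarr[OF N y] by auto
  qed
  have "ideal E R"
  proof (rule ideal_criterion)
    show "E \<subseteq> carrier R" unfolding E_def by blast
    show "\<zero> \<in> E" using NE ideal_zero_closed[OF N] by blast
    show "a \<oplus> b \<in> E" if ab: "a \<in> E" "b \<in> E" for a b
    proof -
      obtain \<beta>1 \<beta>2 where b: "\<forall>l<d. \<beta>1 l \<in> carrier R" "a \<ominus> S \<beta>1 \<in> N"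
         "\<forall>l<d. \<beta>2 l \<in> carrier R" "b \<ominus> S \<beta>2 \<in> N" and abc: "a \<in> carrier R" "b \<in> carrier R"
        using ab unfolding E_def by blast
      have "(a \<oplus> b) \<ominus> S (\<lambda>l. \<beta>1 l \<oplus> \<beta>2 l) = (a \<ominus> S \<beta>1) \<oplus> (b \<ominus> S \<beta>2)"
        unfolding S_add[OF b(1,3)] using abc Sc[OF b(1)] Sc[OF b(3)] by algebra
      then have "(a \<oplus> b) \<ominus> S (\<lambda>l. \<beta>1 l \<oplus> \<beta>2 l) \<in> N" using ideal_add_closed[OF N] b by simp
      moreover have "\<forall>l<d. \<beta>1 l \<oplus> \<beta>2 l \<in> carrier R" using b by simp
      ultimately show ?thesis unfolding E_def using abc by (intro CollectI conjI exI[of _ "\<lambda>l. \<beta>1 l \<oplus> \<beta>2 l"]) auto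
    qed
    show "y \<otimes> a \<in> E" if ay: "a \<in> E" "y \<in> carrier R" for a y
    proof -
      obtain \<beta> where b: "\<forall>l<d. \<beta> l \<in> carrier R" "a \<ominus> S \<beta> \<in> N" and a: "a \<in> carrier R"
        using ay unfolding E_def by blast
      have "y \<otimes> a \<ominus> S (\<lambda>l. y \<otimes> \<beta> l) = y \<otimes> (a \<ominus> S \<beta>)"
        unfolding S_smult[OF b(1) ay(2)] using a ay(2) Sc[OF b(1)] by algebra
      then have "y \<otimes> a \<ominus> S (\<lambda>l. y \<otimes> \<beta> l) \<in> N" using ideal.I_l_closed[OF N b(2) ay(2)] by simp
      moreover have "\<forall>l<d. y \<otimes> \<beta> l \<in> carrier R" using b ay(2) by simp
      ultimately show ?thesis unfolding E_def using a ay(2) by (intro CollectI conjI exI[of _ "\<lambda>l. y \<otimes> \<beta> l"]) auto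
    qed
  qed
  moreover have "Gen \<subseteq> E" unfolding E_def S_def using gens Gen by blast
  ultimately have Gen_E: "Idl Gen \<subseteq> E" using genideal_minimal by blast
  obtain a b where "a \<in> Idl Gen" "b \<in> N" "x = a \<oplus> b" using x unfolding set_add_def' by blast
  then have "x \<in> E" using Gen_E NE ideal_add_closed[OF \<open>ideal E R\<close>] by blast
  then show ?thesis using that unfolding E_def S_def by blast
qed

definition generating_list :: "('a, 'c) ring_scheme \<Rightarrow> 'a set \<Rightarrow> 'a list \<Rightarrow> bool" where
  "generating_list R I ys \<longleftrightarrow> set ys \<subseteq> I \<and> Idl\<^bsub>R\<^esub> (set ys) = I"

definition minimal_generating_list :: "('a, 'c) ring_scheme \<Rightarrow> 'a set \<Rightarrow> 'a list \<Rightarrow> bool" where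
  "minimal_generating_list R I ys \<longleftrightarrow>
     generating_list R I ys \<and> (\<forall>zs. generating_list R I zs \<longrightarrow> length ys \<le> length zs)"

context local_cring
begin

lemma generating_list_closed: "generating_list R M ys \<Longrightarrow> set ys \<subseteq> carrier R"
  unfolding generating_list_def using M_closed by blast

lemma ideal_sq_M_lincomb:
  assumes ys: "generating_list R M ys" and x: "x \<in> ideal_sq R M"
  obtains d where "\<forall>i<length ys. d i \<in> M" "x = lincomb ys d"
proof -
  have ysc: "set ys \<subseteq> carrier R" using generating_list_closed[OF ys] .
  define T where "T = {lincomb ys d | d. \<forall>i<length ys. d i \<in> M}"
  have "ideal T R"
  proof (rule ideal_criterion)
    show "T \<subseteq> carrier R" unfolding T_def using lincomb_closed[OF ysc] M_closed by blast
    have "lincomb ys (\<lambda>_. \<zero>) = (\<Oplus>i\<in>{..<length ys}. \<zero>)"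
      unfolding lincomb_def using ysc by (intro finsum_cong') auto
    then have "\<zero> = lincomb ys (\<lambda>_. \<zero>)" by simp
    then show "\<zero> \<in> T" unfolding T_def mem_Collect_eq using M_zero by (intro exI[of _ "\<lambda>_. \<zero>"]) simp
    show "a \<oplus> b \<in> T" if ab: "a \<in> T" "b \<in> T" for a b
    proof -
      obtain d d' where d: "a = lincomb ys d" "\<forall>i<length ys. d i \<in> M"
        and d': "b = lincomb ys d'" "\<forall>i<length ys. d' i \<in> M"
        using ab unfolding T_def by blast
      then have "a \<oplus> b = lincomb ys (\<lambda>i. d i \<oplus> d' i)" using lincomb_add[OF ysc] M_closed by simp
      then show ?thesis unfolding T_def mem_Collect_eq using d d' M_add
        by (intro exI[of _ "\<lambda>i. d i \<oplus> d' i"]) simp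
    qed
    show "x \<otimes> a \<in> T" if ax: "a \<in> T" "x \<in> carrier R" for a x
    proof -
      obtain d where d: "a = lincomb ys d" "\<forall>i<length ys. d i \<in> M" using ax unfolding T_def by blast
      then have "x \<otimes> a = lincomb ys (\<lambda>i. x \<otimes> d i)" using lincomb_smult[OF ysc] M_closed ax(2) by simp
      then show ?thesis unfolding T_def mem_Collect_eq using d M_l_mult ax(2)
        by (intro exI[of _ "\<lambda>i. x \<otimes> d i"]) simp
    qed
  qed
  moreover have "{a \<otimes> b | a b. a \<in> M \<and> b \<in> M} \<subseteq> T"
  proof
    fix z assume "z \<in> {a \<otimes> b | a b. a \<in> M \<and> b \<in> M}"
    then obtain a b where ab: "a \<in> M" "b \<in> M" "z = a \<otimes> b" by blast
    obtain e where e: "a = lincomb ys e" "\<forall>i<length ys. e i \<in> carrier R"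
      using ab(1) ys genideal_eq_lincombs[OF ysc] unfolding generating_list_def by blast
    have "z = lincomb ys (\<lambda>i. b \<otimes> e i)"
      using ab e lincomb_smult[OF ysc] M_closed m_comm by simp
    then show "z \<in> T" unfolding T_def mem_Collect_eq using e ab(2) M_r_mult
      by (intro exI[of _ "\<lambda>i. b \<otimes> e i"]) (simp add: M_l_mult)
  qed
  ultimately have "ideal_sq R M \<subseteq> T" unfolding ideal_sq_def using genideal_minimal by blast
  then show ?thesis using x that unfolding T_def by blast
qed

lemma generator_redundant:
  assumes ys: "set ys \<subseteq> carrier R" and e: "\<forall>i<length ys. e i \<in> carrier R" "lincomb ys e = \<zero>"
    and k: "k < length ys" "e k \<notin> M"
  shows "set ys \<subseteq> Idl (set (take k ys @ drop (Suc k) ys))"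
proof -
  define zs where "zs = take k ys @ drop (Suc k) ys"
  have zsc: "set zs \<subseteq> carrier R" unfolding zs_def using ys by (auto dest: in_set_takeD in_set_dropD)
  have zI: "ideal (Idl (set zs)) R" using genideal_ideal[OF zsc] .
  have others: "ys ! i \<in> Idl (set zs)" if "i < length ys" "i \<noteq> k" for i
  proof -
    have "ys ! i \<in> set zs"
    proof (cases "i < k")
      case True
      then have "ys ! i = take k ys ! i" "i < length (take k ys)" using k by simp_all
      then show ?thesis unfolding zs_def by (metis UnI1 nth_mem set_append)
    next
      case False
      then have "Suc k \<le> i" using that by simp
      then have "ys ! i = drop (Suc k) ys ! (i - Suc k)" "i - Suc k < length (drop (Suc k) ys)"
        using that by simp_all
      then show ?thesis unfolding zs_def by (metis UnI2 nth_mem set_append)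
    qed
    then show ?thesis using genideal_self[OF zsc] by blast
  qed
  define S where "S = (\<Oplus>i\<in>{..<length ys} - {k}. ys ! i \<otimes> e i)"
  have Sc: "S \<in> carrier R" unfolding S_def using ys e by (auto intro!: finsum_closed)
  have SI: "S \<in> Idl (set zs)" unfolding S_def
    by (rule ideal_finsum_closed[OF zI]) (use others e in \<open>auto intro: ideal.I_r_closed[OF zI]\<close>)
  have "lincomb ys e = ys ! k \<otimes> e k \<oplus> S"
  proof -
    have "{..<length ys} = insert k ({..<length ys} - {k})" using k by auto
    then have "lincomb ys e = (\<Oplus>i\<in>insert k ({..<length ys} - {k}). ys ! i \<otimes> e i)"
      unfolding lincomb_def by simp
    also have "\<dots> = ys ! k \<otimes> e k \<oplus> S"
      unfolding S_def using ys e k by (subst finsum_insert) (auto simp: Pi_def)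
    finally show ?thesis .
  qed
  then have relation: "ys ! k \<otimes> e k \<oplus> S = \<zero>" using e(2) by simp
  obtain t where t: "t \<in> carrier R" "t \<otimes> e k = \<one>" using notin_M_invertible e(1) k by blast
  have ykc: "ys ! k \<in> carrier R" "e k \<in> carrier R" using ys e k by auto
  have "ys ! k = (t \<otimes> e k) \<otimes> ys ! k" using t ykc by simp
  also have "\<dots> = t \<otimes> (ys ! k \<otimes> e k \<oplus> S) \<ominus> t \<otimes> S" using t(1) ykc Sc by algebra
  also have "\<dots> = (\<ominus> t) \<otimes> S" unfolding relation using t(1) Sc by (simp add: a_minus_def l_minus)
  finally have "ys ! k \<in> Idl (set zs)" using ideal.I_l_closed[OF zI SI] t(1) by simp
  then have "ys ! i \<in> Idl (set zs)" if "i < length ys" for i using others that by (cases "i = k") auto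
  then show ?thesis unfolding zs_def by (auto simp: in_set_conv_nth)
qed

text \<open>The coordinates with respect to a minimal generating list identify \<open>M/M\<^sup>2\<close> with
  \<open>(R/M)\<^sup>r\<close>.\<close>

lemma minimal_generating_list_coeffs_in_M:
  assumes ys: "minimal_generating_list R M ys"
    and c: "\<forall>i<length ys. c i \<in> carrier R" and sq: "lincomb ys c \<in> ideal_sq R M"
  shows "\<forall>i<length ys. c i \<in> M"
proof (rule ccontr)
  assume "\<not> (\<forall>i<length ys. c i \<in> M)"
  then obtain k where k: "k < length ys" "c k \<notin> M" by blast
  have gen: "generating_list R M ys" using ys unfolding minimal_generating_list_def by blast
  have ysc: "set ys \<subseteq> carrier R" using generating_list_closed[OF gen] .
  obtain d where d: "\<forall>i<length ys. d i \<in> M" "lincomb ys c = lincomb ys d"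
    using ideal_sq_M_lincomb[OF gen sq] by metis
  define e where "e i = c i \<ominus> d i" for i
  have ec: "\<forall>i<length ys. e i \<in> carrier R" unfolding e_def using c d M_closed by blast
  have "lincomb ys e = lincomb ys c \<ominus> lincomb ys d" unfolding e_def
    by (rule lincomb_diff[OF ysc, symmetric]) (use c d M_closed in auto)
  also have "\<dots> = \<zero>" unfolding d(2) using lincomb_closed[OF ysc] d M_closed by (simp add: r_neg a_minus_def)
  finally have e0: "lincomb ys e = \<zero>" .
  have "e k \<notin> M"
  proof
    assume "e k \<in> M"
    moreover have "c k = e k \<oplus> d k" unfolding e_def using c d k M_closed by algebra
    ultimately show False using M_add d k by auto
  qed
  define zs where "zs = take k ys @ drop (Suc k) ys"
  have "set ys \<subseteq> Idl (set zs)" unfolding zs_def by (rule generator_redundant[OF ysc ec e0 k(1)]) fact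
  moreover have zsM: "set zs \<subseteq> M" using gen unfolding zs_def generating_list_def
    by (auto dest: in_set_takeD in_set_dropD)
  ultimately have "M \<subseteq> Idl (set zs)"
    using gen genideal_minimal[OF genideal_ideal] M_closed unfolding generating_list_def by blast
  then have "generating_list R M zs"
    using genideal_minimal[OF M_ideal zsM] zsM unfolding generating_list_def by blast
  then have "length ys \<le> length zs" using ys unfolding minimal_generating_list_def by blast
  moreover have "length zs = length ys - 1" unfolding zs_def using k by simp
  ultimately show False using k by simp
qed

lemma absorb_M_multiple:
  assumes "y \<in> carrier R" "a \<in> carrier R" "L \<in> carrier R" "\<epsilon> \<in> M" "y = a \<oplus> (y \<otimes> \<epsilon> \<oplus> L)"
  obtains v where "v \<in> carrier R" "y = v \<otimes> a \<oplus> v \<otimes> L"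
proof -
  have \<epsilon>: "\<epsilon> \<in> carrier R" using assms(4) M_closed by blast
  have "\<one> \<ominus> \<epsilon> \<notin> M"
  proof
    assume "\<one> \<ominus> \<epsilon> \<in> M"
    moreover have "\<one> = (\<one> \<ominus> \<epsilon>) \<oplus> \<epsilon>" using \<epsilon> by algebra
    ultimately show False using M_add assms(4) one_notin_M by metis
  qed
  then obtain v where v: "v \<in> carrier R" "v \<otimes> (\<one> \<ominus> \<epsilon>) = \<one>"
    using notin_M_invertible \<epsilon> by blast
  have "y \<otimes> (\<one> \<ominus> \<epsilon>) = y \<ominus> y \<otimes> \<epsilon>" using assms(1) \<epsilon> by algebra
  also have "\<dots> = (a \<oplus> (y \<otimes> \<epsilon> \<oplus> L)) \<ominus> y \<otimes> \<epsilon>"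
    using assms(5) by (rule arg_cong[where f="\<lambda>z. z \<ominus> y \<otimes> \<epsilon>"])
  also have "\<dots> = a \<oplus> L" using assms(1-3) \<epsilon> by algebra
  finally have "y \<otimes> (\<one> \<ominus> \<epsilon>) = a \<oplus> L" .
  then have "v \<otimes> (y \<otimes> (\<one> \<ominus> \<epsilon>)) = v \<otimes> a \<oplus> v \<otimes> L" using v(1) assms(2,3) by (simp add: r_distr)
  moreover have "v \<otimes> (y \<otimes> (\<one> \<ominus> \<epsilon>)) = y" using v assms(1) \<epsilon> by (metis m_lcomm minus_closed one_closed r_one)
  ultimately show ?thesis using that v(1) by metis
qed

lemma lincomb_Cons_eliminate:
  assumes K: "ideal K R" and ys: "set ys \<subseteq> carrier R"
    and y: "y = a \<oplus> lincomb ys \<epsilon>" "a \<in> K" "\<forall>t<length ys. \<epsilon> t \<in> M"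
    and z: "z = b \<oplus> lincomb (y # ys) \<eta>" "b \<in> K" "\<forall>t<Suc (length ys). \<eta> t \<in> M"
  shows "\<exists>b'\<in>K. \<exists>\<eta>'. (\<forall>t<length ys. \<eta>' t \<in> M) \<and> z = b' \<oplus> lincomb ys \<eta>'"
proof -
  have ac: "a \<in> carrier R" "b \<in> carrier R" using y(2) z(2) ideal.Icarr[OF K] by auto
  have \<eta>0: "\<eta> 0 \<in> M" using z(3) by simp
  have \<eta>c: "\<And>t. t < Suc (length ys) \<Longrightarrow> \<eta> t \<in> carrier R" using z(3) M_closed by blast
  define L1 where "L1 = lincomb ys \<epsilon>"
  define L2 where "L2 = lincomb ys (\<lambda>t. \<eta> (Suc t))"
  have L1: "L1 \<in> carrier R" unfolding L1_def using lincomb_closed[OF ys] y(3) M_closed by blast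
  have L2: "L2 \<in> carrier R" unfolding L2_def using lincomb_closed[OF ys] \<eta>c by simp
  have yc: "y \<in> carrier R" using y(1) ac L1 unfolding L1_def by simp
  have "z = b \<oplus> ((a \<oplus> L1) \<otimes> \<eta> 0 \<oplus> L2)"
    unfolding L1_def L2_def using z(1) lincomb_Cons[of y ys \<eta>] ys yc \<eta>c y(1) by simp
  also have "\<dots> = (b \<oplus> a \<otimes> \<eta> 0) \<oplus> (\<eta> 0 \<otimes> L1 \<oplus> L2)"
    using ac L1 L2 M_closed[OF \<eta>0] by algebra
  also have "\<eta> 0 \<otimes> L1 \<oplus> L2 = lincomb ys (\<lambda>t. \<eta> 0 \<otimes> \<epsilon> t \<oplus> \<eta> (Suc t))"
    unfolding L1_def L2_def using lincomb_smult[OF ys] lincomb_add[OF ys] y(3) \<eta>c M_closed by simp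
  finally have "z = (b \<oplus> a \<otimes> \<eta> 0) \<oplus> lincomb ys (\<lambda>t. \<eta> 0 \<otimes> \<epsilon> t \<oplus> \<eta> (Suc t))" .
  moreover have "b \<oplus> a \<otimes> \<eta> 0 \<in> K"
    using ideal_add_closed[OF K z(2) ideal.I_r_closed[OF K y(2) M_closed[OF \<eta>0]]] .
  moreover have "\<forall>t<length ys. \<eta> 0 \<otimes> \<epsilon> t \<oplus> \<eta> (Suc t) \<in> M"
    using M_add M_r_mult \<eta>0 y(3) z(3) M_closed by simp
  ultimately show ?thesis
    by (intro bexI[of _ "b \<oplus> a \<otimes> \<eta> 0"] exI[of _ "\<lambda>t. \<eta> 0 \<otimes> \<epsilon> t \<oplus> \<eta> (Suc t)"] conjI)
qed

lemma nakayama_generators: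
  assumes K: "ideal K R"
  shows "set ys \<subseteq> carrier R \<Longrightarrow>
    \<forall>j<length ys. \<exists>a\<in>K. \<exists>\<epsilon>. (\<forall>t<length ys. \<epsilon> t \<in> M) \<and> ys ! j = a \<oplus> lincomb ys \<epsilon> \<Longrightarrow>
    set ys \<subseteq> K"
proof (induction ys)
  case Nil
  then show ?case by simp
next
  case (Cons y ys)
  have ysc: "set ys \<subseteq> carrier R" and yc: "y \<in> carrier R" using Cons.prems(1) by auto
  obtain a \<epsilon> where a: "a \<in> K" "\<forall>t<Suc (length ys). \<epsilon> t \<in> M" "y = a \<oplus> lincomb (y # ys) \<epsilon>"
    using Cons.prems(2) by fastforce
  have ac: "a \<in> carrier R" using a(1) ideal.Icarr[OF K] by blast
  have \<epsilon>c: "\<And>t. t < Suc (length ys) \<Longrightarrow> \<epsilon> t \<in> carrier R" using a(2) M_closed by blast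
  have L: "lincomb ys (\<lambda>t. \<epsilon> (Suc t)) \<in> carrier R" using lincomb_closed[OF ysc] \<epsilon>c by simp
  have "y = a \<oplus> (y \<otimes> \<epsilon> 0 \<oplus> lincomb ys (\<lambda>t. \<epsilon> (Suc t)))"
    using a(3) lincomb_Cons[OF Cons.prems(1) \<epsilon>c] by simp
  then obtain v where v: "v \<in> carrier R" "y = v \<otimes> a \<oplus> v \<otimes> lincomb ys (\<lambda>t. \<epsilon> (Suc t))"
    using absorb_M_multiple[OF yc ac L] a(2) by blast
  have y_eq: "y = v \<otimes> a \<oplus> lincomb ys (\<lambda>t. v \<otimes> \<epsilon> (Suc t))"
    using v lincomb_smult[OF ysc] \<epsilon>c by simp
  have va: "v \<otimes> a \<in> K" using ideal.I_l_closed[OF K a(1) v(1)] .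
  have v\<epsilon>: "\<forall>t<length ys. v \<otimes> \<epsilon> (Suc t) \<in> M" using a(2) M_l_mult v(1) by simp
  have "\<forall>j<length ys. \<exists>b\<in>K. \<exists>\<eta>. (\<forall>t<length ys. \<eta> t \<in> M) \<and> ys ! j = b \<oplus> lincomb ys \<eta>"
  proof (intro allI impI)
    fix j assume "j < length ys"
    then obtain b \<eta> where b: "b \<in> K" "\<forall>t<Suc (length ys). \<eta> t \<in> M" "ys ! j = b \<oplus> lincomb (y # ys) \<eta>"
      using Cons.prems(2) by fastforce
    show "\<exists>b\<in>K. \<exists>\<eta>. (\<forall>t<length ys. \<eta> t \<in> M) \<and> ys ! j = b \<oplus> lincomb ys \<eta>"
      using lincomb_Cons_eliminate[OF K ysc y_eq va v\<epsilon> b(3,1,2)] .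
  qed
  then have ysK: "set ys \<subseteq> K" by (rule Cons.IH[OF ysc])
  then have "lincomb ys (\<lambda>t. v \<otimes> \<epsilon> (Suc t)) \<in> K"
    by (rule lincomb_in_ideal[OF K]) (use v\<epsilon> M_closed in blast)
  then have "y \<in> K" using y_eq ideal_add_closed[OF K va] by simp
  then show ?case using ysK by simp
qed

lemma in_span_mod_of_generators:
  fixes d :: nat
  assumes ys: "minimal_generating_list R M ys"
    and \<gamma>: "\<forall>l<d. is_vec R (length ys) (\<gamma> l)" and Gen: "Gen \<subseteq> carrier R"
    and gens: "\<forall>x\<in>Gen. \<exists>\<beta>. (\<forall>l<d. \<beta> l \<in> carrier R) \<and>
      x \<ominus> (\<Oplus>l\<in>{..<d}. \<beta> l \<otimes> lincomb ys (\<gamma> l)) \<in> ideal_sq R M"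
    and w: "is_vec R (length ys) w" "lincomb ys w \<in> Idl Gen <+>\<^bsub>R\<^esub> ideal_sq R M"
  shows "in_span_mod R M (length ys) {..<d} \<gamma> w"
proof -
  have ysc: "set ys \<subseteq> carrier R"
    using ys generating_list_closed unfolding minimal_generating_list_def by blast
  have \<gamma>c: "\<And>l j. l < d \<Longrightarrow> j < length ys \<Longrightarrow> \<gamma> l j \<in> carrier R" using \<gamma> unfolding is_vec_def by blast
  have wc: "\<And>j. j < length ys \<Longrightarrow> w j \<in> carrier R" using w unfolding is_vec_def by blast
  obtain \<beta> where \<beta>: "\<forall>l<d. \<beta> l \<in> carrier R"
    "lincomb ys w \<ominus> (\<Oplus>l\<in>{..<d}. \<beta> l \<otimes> lincomb ys (\<gamma> l)) \<in> ideal_sq R M"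
    using genideal_plus_congruent_combination[OF ideal_sq_ideal _ Gen gens w(2)] lincomb_closed[OF ysc] \<gamma>c M_closed
    by blast
  have sc: "\<And>j. j < length ys \<Longrightarrow> (\<Oplus>l\<in>{..<d}. \<beta> l \<otimes> \<gamma> l j) \<in> carrier R"
    using \<beta> \<gamma>c by (auto intro!: finsum_closed)
  have "(\<Oplus>l\<in>{..<d}. \<beta> l \<otimes> lincomb ys (\<gamma> l)) = lincomb ys (\<lambda>j. \<Oplus>l\<in>{..<d}. \<beta> l \<otimes> \<gamma> l j)"
    by (rule lincomb_finsum[OF _ ysc]) (use \<beta> \<gamma>c in auto)
  then have "lincomb ys w \<ominus> (\<Oplus>l\<in>{..<d}. \<beta> l \<otimes> lincomb ys (\<gamma> l))
      = lincomb ys (\<lambda>j. w j \<ominus> (\<Oplus>l\<in>{..<d}. \<beta> l \<otimes> \<gamma> l j))"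
    using lincomb_diff[OF ysc, of w "\<lambda>j. \<Oplus>l\<in>{..<d}. \<beta> l \<otimes> \<gamma> l j"] wc sc by simp
  then have "\<forall>j<length ys. w j \<ominus> (\<Oplus>l\<in>{..<d}. \<beta> l \<otimes> \<gamma> l j) \<in> M"
    using \<beta>(2) wc sc by (intro minimal_generating_list_coeffs_in_M[OF ys]) auto
  then show ?thesis unfolding in_span_mod_def using \<beta> by auto
qed

end

lemma set_add_iff: "x \<in> A <+>\<^bsub>R\<^esub> B \<longleftrightarrow> (\<exists>a\<in>A. \<exists>b\<in>B. x = a \<oplus>\<^bsub>R\<^esub> b)"
  unfolding set_add_def' by auto

lemma (in ring) union_subset_set_add: "ideal I R \<Longrightarrow> ideal J R \<Longrightarrow> I \<union> J \<subseteq> I <+>\<^bsub>R\<^esub> J"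
  using union_genideal genideal_self ideal.Icarr by (metis Un_subset_iff subsetI)

lemma (in ring) indep_mod_cong:
  assumes "\<forall>j<k. \<forall>i<r. v j i = v' j i \<and> v' j i \<in> carrier R"
  shows "indep_mod R M r v k \<longleftrightarrow> indep_mod R M r v' k"
proof -
  have "(\<Oplus>j\<in>{..<k}. c j \<otimes> v j i) = (\<Oplus>j\<in>{..<k}. c j \<otimes> v' j i)"
    if "\<forall>j<k. c j \<in> carrier R" "i < r" for c i
    using that assms by (intro finsum_cong') auto
  then show ?thesis unfolding indep_mod_def by auto
qed

definition cotangent_coords :: "('a, 'c) ring_scheme \<Rightarrow> 'a set \<Rightarrow> 'a list \<Rightarrow> 'a set \<Rightarrow> (nat \<Rightarrow> 'a) set" where
  "cotangent_coords R M xs J =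
     {a. is_vec R (length xs) a \<and> ring.lincomb R xs a \<in> J <+>\<^bsub>R\<^esub> ideal_sq R M}"

locale local_quotient = local_cring + fixes J
  assumes J_ideal: "ideal J R" and J_proper: "\<one> \<notin> J"
begin

lemma J_subset_M: "J \<subseteq> M"
  using proper_ideal_subset_M J_ideal J_proper by blast

lemma quotient_cring: "cring (R Quot J)"
  using ideal.quotient_is_cring[OF J_ideal is_cring] .

lemma coset_hom: "ring_hom_cring R (R Quot J) ((+>) J)"
  using ideal.rcos_ring_hom_cring[OF J_ideal is_cring] .

lemma coset_closed: "a \<in> carrier R \<Longrightarrow> J +> a \<in> carrier (R Quot J)"
  using ring_hom_memE(1)[OF ideal.rcos_ring_hom[OF J_ideal]] by blast

lemma quotient_elem: "x \<in> carrier (R Quot J) \<Longrightarrow> \<exists>a\<in>carrier R. x = J +> a"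
  unfolding FactRing_def A_RCOSETS_def' by auto

lemma coset_mult: "a \<in> carrier R \<Longrightarrow> b \<in> carrier R \<Longrightarrow> (J +> a) \<otimes>\<^bsub>R Quot J\<^esub> (J +> b) = J +> (a \<otimes> b)"
  using ring_hom_memE(2)[OF ideal.rcos_ring_hom[OF J_ideal]] by metis

lemma coset_one: "\<one>\<^bsub>R Quot J\<^esub> = J +> \<one>"
  unfolding FactRing_def by simp

lemma coset_finsum:
  assumes "finite A" "\<And>i. i \<in> A \<Longrightarrow> f i \<in> carrier R" "\<And>i. i \<in> A \<Longrightarrow> g i \<in> carrier R"
  shows "J +> (\<Oplus>i\<in>A. f i \<otimes> g i) = (\<Oplus>\<^bsub>R Quot J\<^esub>i\<in>A. (J +> f i) \<otimes>\<^bsub>R Quot J\<^esub> (J +> g i))"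
proof -
  interpret Q: cring "R Quot J" by (rule quotient_cring)
  have "J +> (\<Oplus>i\<in>A. f i \<otimes> g i) = (\<Oplus>\<^bsub>R Quot J\<^esub>i\<in>A. J +> (f i \<otimes> g i))"
    using ring_hom_cring.hom_finsum[OF coset_hom, of "\<lambda>i. f i \<otimes> g i" A] assms
    by (auto simp: Pi_def comp_def)
  also have "\<dots> = (\<Oplus>\<^bsub>R Quot J\<^esub>i\<in>A. (J +> f i) \<otimes>\<^bsub>R Quot J\<^esub> (J +> g i))"
    using assms coset_mult coset_closed by (intro Q.finsum_cong') (auto simp: Pi_def)
  finally show ?thesis .
qed

lemma coset_in_image_iff:
  assumes U: "ideal U R" "J \<subseteq> U" and a: "a \<in> carrier R"
  shows "J +> a \<in> (+>) J ` U \<longleftrightarrow> a \<in> U"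
proof
  assume "J +> a \<in> (+>) J ` U"
  then obtain u where u: "u \<in> U" "J +> a = J +> u" by blast
  have uc: "u \<in> carrier R" using u ideal.Icarr[OF U(1)] by blast
  have "a \<ominus> u \<in> J" using quotient_eq_iff_same_a_r_cos[OF J_ideal a uc] u by blast
  then have "(a \<ominus> u) \<oplus> u \<in> U" using ideal_add_closed[OF U(1)] U(2) u by blast
  moreover have "(a \<ominus> u) \<oplus> u = a" using a uc by algebra
  ultimately show "a \<in> U" by simp
qed auto

lemma coset_in_max_iff: "a \<in> carrier R \<Longrightarrow> J +> a \<in> (+>) J ` M \<longleftrightarrow> a \<in> M"
  using coset_in_image_iff[OF M_ideal J_subset_M] .

lemma proper_quotient_ideal_subset:
  assumes N: "ideal N (R Quot J)" "\<one>\<^bsub>R Quot J\<^esub> \<notin> N"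
  shows "N \<subseteq> (+>) J ` M"
proof
  fix x assume x: "x \<in> N"
  then obtain a where a: "a \<in> carrier R" "x = J +> a" using quotient_elem ideal.Icarr[OF N(1)] by blast
  show "x \<in> (+>) J ` M"
  proof (rule ccontr)
    assume "x \<notin> (+>) J ` M"
    then have "a \<notin> M" using a coset_in_max_iff by blast
    then obtain t where t: "t \<in> carrier R" "t \<otimes> a = \<one>" using notin_M_invertible a(1) by blast
    have "(J +> t) \<otimes>\<^bsub>R Quot J\<^esub> x \<in> N" using ideal.I_l_closed[OF N(1) x coset_closed[OF t(1)]] .
    moreover have "(J +> t) \<otimes>\<^bsub>R Quot J\<^esub> x = \<one>\<^bsub>R Quot J\<^esub>"
      unfolding a(2) coset_one using coset_mult[OF t(1) a(1)] t(2) by simp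
    ultimately show False using N(2) by simp
  qed
qed

lemma maximalideal_quotient: "maximalideal ((+>) J ` M) (R Quot J)"
proof (rule maximalidealI)
  show "ideal ((+>) J ` M) (R Quot J)" using ring_ideal_imp_quot_ideal[OF J_ideal M_ideal] .
  have "\<one>\<^bsub>R Quot J\<^esub> \<notin> (+>) J ` M" using coset_in_max_iff[of \<one>] one_notin_M unfolding coset_one by simp
  then show "carrier (R Quot J) \<noteq> (+>) J ` M"
    using ring.ring_simprules(6)[OF ideal.quotient_is_ring[OF J_ideal]] by blast
  fix N assume N: "ideal N (R Quot J)" "(+>) J ` M \<subseteq> N" "N \<subseteq> carrier (R Quot J)"
  show "N = (+>) J ` M \<or> N = carrier (R Quot J)"
    using N proper_quotient_ideal_subset ideal.one_imp_carrier by blast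
qed

lemma max_ideal_quotient: "max_ideal (R Quot J) = (+>) J ` M"
  unfolding max_ideal_def
proof (rule the_equality[where P="\<lambda>N. maximalideal N (R Quot J)", OF maximalideal_quotient])
  fix N assume N: "maximalideal N (R Quot J)"
  have "\<one>\<^bsub>R Quot J\<^esub> \<notin> N"
    using maximalideal.I_notcarr[OF N] ideal.one_imp_carrier[OF maximalideal.axioms(1)[OF N]] by blast
  then have "N \<subseteq> (+>) J ` M" using proper_quotient_ideal_subset maximalideal.axioms(1)[OF N] by blast
  moreover have "(+>) J ` M \<subseteq> carrier (R Quot J)"
    using ideal.Icarr[OF maximalideal.axioms(1)[OF maximalideal_quotient]] by blast
  ultimately have "(+>) J ` M = N \<or> (+>) J ` M = carrier (R Quot J)"
    using maximalideal.I_maximal[OF N maximalideal.axioms(1)[OF maximalideal_quotient]] by blast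
  then show "N = (+>) J ` M" using maximalideal.I_notcarr[OF maximalideal_quotient] by auto
qed

lemma ideal_sq_quotient: "ideal_sq (R Quot J) ((+>) J ` M) = (+>) J ` (J <+>\<^bsub>R\<^esub> ideal_sq R M)"
proof
  interpret Q: ring "R Quot J" using ideal.quotient_is_ring[OF J_ideal] .
  have sqM: "ideal (ideal_sq R M) R" using ideal_sq_ideal M_closed by blast
  define U where "U = J <+>\<^bsub>R\<^esub> ideal_sq R M"
  have U: "ideal U R" unfolding U_def using add_ideals[OF J_ideal sqM] .
  have JU: "J \<union> ideal_sq R M \<subseteq> U" unfolding U_def using union_subset_set_add[OF J_ideal sqM] .
  have Mq: "(+>) J ` M \<subseteq> carrier (R Quot J)" using coset_closed M_closed by blast
  show "ideal_sq (R Quot J) ((+>) J ` M) \<subseteq> (+>) J ` U"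
    unfolding ideal_sq_def
  proof (rule Q.genideal_minimal)
    show "ideal ((+>) J ` U) (R Quot J)" using ring_ideal_imp_quot_ideal[OF J_ideal U] .
    show "{x \<otimes>\<^bsub>R Quot J\<^esub> y | x y. x \<in> (+>) J ` M \<and> y \<in> (+>) J ` M} \<subseteq> (+>) J ` U"
    proof
      fix z assume "z \<in> {x \<otimes>\<^bsub>R Quot J\<^esub> y | x y. x \<in> (+>) J ` M \<and> y \<in> (+>) J ` M}"
      then obtain a b where ab: "a \<in> M" "b \<in> M" "z = (J +> a) \<otimes>\<^bsub>R Quot J\<^esub> (J +> b)" by blast
      then have "z = J +> (a \<otimes> b)" using coset_mult M_closed by simp
      moreover have "a \<otimes> b \<in> U" using ideal_sq_mult[OF _ ab(1,2)] M_closed JU by blast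
      ultimately show "z \<in> (+>) J ` U" by blast
    qed
  qed
  have SQ: "ideal (ideal_sq (R Quot J) ((+>) J ` M)) (R Quot J)"
    using Q.ideal_sq_ideal[OF Mq] .
  define V where "V = {a \<in> carrier R. J +> a \<in> ideal_sq (R Quot J) ((+>) J ` M)}"
  have V: "ideal V R" unfolding V_def
    using ring_hom_ring.ideal_vimage[OF ideal.rcos_ring_hom_ring[OF J_ideal] SQ] .
  have "J \<subseteq> V"
  proof
    fix j assume j: "j \<in> J"
    have "J +> j = \<zero>\<^bsub>R Quot J\<^esub>" using a_rcos_zero[OF J_ideal j] unfolding FactRing_def by simp
    then show "j \<in> V" unfolding V_def using j ideal.Icarr[OF J_ideal] ideal_zero_closed[OF SQ] by simp
  qed
  moreover have "ideal_sq R M \<subseteq> V"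
    unfolding ideal_sq_def
  proof (rule genideal_minimal[OF V], rule subsetI)
    fix z assume "z \<in> {a \<otimes> b | a b. a \<in> M \<and> b \<in> M}"
    then obtain a b where ab: "a \<in> M" "b \<in> M" "z = a \<otimes> b" by blast
    have "J +> z = (J +> a) \<otimes>\<^bsub>R Quot J\<^esub> (J +> b)" using ab coset_mult M_closed by simp
    also have "\<dots> \<in> ideal_sq (R Quot J) ((+>) J ` M)" using Q.ideal_sq_mult[OF Mq] ab by blast
    finally show "z \<in> V" unfolding V_def using ab M_closed by simp
  qed
  ultimately have "U \<subseteq> V" unfolding U_def set_add_def' using ideal_add_closed[OF V] by blast
  then show "(+>) J ` U \<subseteq> ideal_sq (R Quot J) ((+>) J ` M)" unfolding V_def by blast
qed

lemma coset_in_ideal_sq_quotient_iff: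
  "a \<in> carrier R \<Longrightarrow> J +> a \<in> ideal_sq (R Quot J) ((+>) J ` M) \<longleftrightarrow> a \<in> J <+>\<^bsub>R\<^esub> ideal_sq R M"
  unfolding ideal_sq_quotient
  by (rule coset_in_image_iff[OF add_ideals[OF J_ideal ideal_sq_ideal] union_subset_set_add[THEN Un_subset_iff[THEN iffD1, THEN conjunct1]]])
    (use J_ideal ideal_sq_ideal M_closed in auto)

lemma indep_mod_quotient_iff:
  assumes u: "\<forall>j<k. is_vec R r (u j)"
  shows "indep_mod (R Quot J) ((+>) J ` M) r (\<lambda>j i. J +> u j i) k \<longleftrightarrow> indep_mod R M r u k"
proof -
  interpret Q: cring "R Quot J" by (rule quotient_cring)
  have uc: "\<And>j i. j < k \<Longrightarrow> i < r \<Longrightarrow> u j i \<in> carrier R" using u unfolding is_vec_def by blast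
  have sum_coset: "J +> (\<Oplus>j\<in>{..<k}. c j \<otimes> u j i)
      = (\<Oplus>\<^bsub>R Quot J\<^esub>j\<in>{..<k}. (J +> c j) \<otimes>\<^bsub>R Quot J\<^esub> (J +> u j i))"
    if "\<forall>j<k. c j \<in> carrier R" "i < r" for c i
    by (rule coset_finsum) (use that uc in auto)
  have sum_closed: "(\<Oplus>j\<in>{..<k}. c j \<otimes> u j i) \<in> carrier R"
    if "\<forall>j<k. c j \<in> carrier R" "i < r" for c i
    using that uc by (auto intro!: finsum_closed)
  show ?thesis
  proof
    assume indep: "indep_mod (R Quot J) ((+>) J ` M) r (\<lambda>j i. J +> u j i) k"
    show "indep_mod R M r u k"
      unfolding indep_mod_def
    proof (intro allI impI)
      fix c j assume c: "(\<forall>j<k. c j \<in> carrier R) \<and> (\<forall>i<r. (\<Oplus>j\<in>{..<k}. c j \<otimes> u j i) \<in> M)"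
        and j: "j < k"
      have "\<forall>i<r. (\<Oplus>\<^bsub>R Quot J\<^esub>j\<in>{..<k}. (J +> c j) \<otimes>\<^bsub>R Quot J\<^esub> (J +> u j i)) \<in> (+>) J ` M"
        using c sum_coset[symmetric] by blast
      moreover have "\<forall>j<k. J +> c j \<in> carrier (R Quot J)" using c coset_closed by blast
      ultimately have "J +> c j \<in> (+>) J ` M"
        using indep[unfolded indep_mod_def, THEN spec[of _ "\<lambda>j. J +> c j"]] j by blast
      then show "c j \<in> M" using coset_in_max_iff[of "c j"] c j by simp
    qed
  next
    assume indep: "indep_mod R M r u k"
    show "indep_mod (R Quot J) ((+>) J ` M) r (\<lambda>j i. J +> u j i) k"
      unfolding indep_mod_def
    proof (intro allI impI)
      fix c j assume c: "(\<forall>j<k. c j \<in> carrier (R Quot J)) \<and>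
          (\<forall>i<r. (\<Oplus>\<^bsub>R Quot J\<^esub>j\<in>{..<k}. c j \<otimes>\<^bsub>R Quot J\<^esub> (J +> u j i)) \<in> (+>) J ` M)"
        and j: "j < k"
      have "\<forall>j. \<exists>a. j < k \<longrightarrow> a \<in> carrier R \<and> c j = J +> a"
      proof
        fix j show "\<exists>a. j < k \<longrightarrow> a \<in> carrier R \<and> c j = J +> a"
          using c quotient_elem[of "c j"] by (cases "j < k") auto
      qed
      then obtain c' where c': "\<forall>j. j < k \<longrightarrow> c' j \<in> carrier R \<and> c j = J +> c' j"
        using choice[of "\<lambda>j a. j < k \<longrightarrow> a \<in> carrier R \<and> c j = J +> a"] by blast
      have "\<forall>i<r. (\<Oplus>j\<in>{..<k}. c' j \<otimes> u j i) \<in> M"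
      proof (intro allI impI)
        fix i assume i: "i < r"
        have "J +> (\<Oplus>j\<in>{..<k}. c' j \<otimes> u j i)
            = (\<Oplus>\<^bsub>R Quot J\<^esub>j\<in>{..<k}. (J +> c' j) \<otimes>\<^bsub>R Quot J\<^esub> (J +> u j i))"
          using sum_coset[of c' i] c' i by simp
        also have "\<dots> = (\<Oplus>\<^bsub>R Quot J\<^esub>j\<in>{..<k}. c j \<otimes>\<^bsub>R Quot J\<^esub> (J +> u j i))"
          using c' uc i coset_closed by (intro Q.finsum_cong') (auto simp: Pi_def)
        finally have "J +> (\<Oplus>j\<in>{..<k}. c' j \<otimes> u j i)
            = (\<Oplus>\<^bsub>R Quot J\<^esub>j\<in>{..<k}. c j \<otimes>\<^bsub>R Quot J\<^esub> (J +> u j i))" .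
        then have "J +> (\<Oplus>j\<in>{..<k}. c' j \<otimes> u j i) \<in> (+>) J ` M" using c i by simp
        moreover have "(\<Oplus>j\<in>{..<k}. c' j \<otimes> u j i) \<in> carrier R" using sum_closed c' i by simp
        ultimately show "(\<Oplus>j\<in>{..<k}. c' j \<otimes> u j i) \<in> M" using coset_in_max_iff by blast
      qed
      then have "c' j \<in> M" using indep[unfolded indep_mod_def, THEN spec[of _ c']] c' j by blast
      then show "c j \<in> (+>) J ` M" using c' j by blast
    qed
  qed
qed

lemma rd_quotient:
  assumes xs: "xs = (SOME xs. minimal_basis R xs)" and xs_carrier: "set xs \<subseteq> carrier R"
  shows "rd R (R Quot J) ((+>) J) = dim_mod R M (length xs) (cotangent_coords R M xs J)"
proof -
  interpret Q: cring "R Quot J" by (rule quotient_cring)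
  define r where "r = length xs"
  define P where "P = cotangent_coords R M xs J"
  define K where "K = rd_kernel R (R Quot J) ((+>) J)"
  have K: "K = {b. (\<forall>i<r. b i \<in> carrier (R Quot J)) \<and>
      (\<Oplus>\<^bsub>R Quot J\<^esub>i\<in>{..<r}. (J +> xs ! i) \<otimes>\<^bsub>R Quot J\<^esub> b i) \<in> ideal_sq (R Quot J) ((+>) J ` M)}"
    unfolding K_def rd_kernel_def Let_def xs[symmetric] max_ideal_quotient r_def ..
  have in_K_iff: "b \<in> K \<longleftrightarrow> a \<in> P" if a: "is_vec R r a" and b: "\<forall>i<r. b i = J +> a i" for a b
  proof -
    have ac: "\<And>i. i < r \<Longrightarrow> a i \<in> carrier R" using a unfolding is_vec_def by blast
    have xc: "\<And>i. i < r \<Longrightarrow> xs ! i \<in> carrier R" using xs_carrier unfolding r_def by simp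
    have "(\<Oplus>\<^bsub>R Quot J\<^esub>i\<in>{..<r}. (J +> xs ! i) \<otimes>\<^bsub>R Quot J\<^esub> b i)
        = (\<Oplus>\<^bsub>R Quot J\<^esub>i\<in>{..<r}. (J +> xs ! i) \<otimes>\<^bsub>R Quot J\<^esub> (J +> a i))"
      using b ac xc coset_closed by (intro Q.finsum_cong') (auto simp: Pi_def)
    also have "\<dots> = J +> lincomb xs a"
      unfolding lincomb_def r_def[symmetric] by (rule coset_finsum[symmetric]) (use ac xc in auto)
    finally have "b \<in> K \<longleftrightarrow> J +> lincomb xs a \<in> ideal_sq (R Quot J) ((+>) J ` M)"
      unfolding K using b ac coset_closed by auto
    also have "\<dots> \<longleftrightarrow> a \<in> P"
      unfolding P_def cotangent_coords_def r_def[symmetric]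
      using coset_in_ideal_sq_quotient_iff lincomb_closed[OF xs_carrier] ac a r_def by auto
    finally show ?thesis .
  qed
  have "(\<exists>v. (\<forall>j<k. v j \<in> K) \<and> indep_mod (R Quot J) ((+>) J ` M) r v k) \<longleftrightarrow>
        (\<exists>u. (\<forall>j<k. u j \<in> P) \<and> indep_mod R M r u k)" for k
  proof
    assume "\<exists>v. (\<forall>j<k. v j \<in> K) \<and> indep_mod (R Quot J) ((+>) J ` M) r v k"
    then obtain v where v: "\<forall>j<k. v j \<in> K" "indep_mod (R Quot J) ((+>) J ` M) r v k" by blast
    have "\<forall>j. \<exists>w. \<forall>i. j < k \<and> i < r \<longrightarrow> w i \<in> carrier R \<and> v j i = J +> w i"
    proof
      fix j
      have "\<forall>i. \<exists>a. j < k \<and> i < r \<longrightarrow> a \<in> carrier R \<and> v j i = J +> a"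
      proof
        fix i
        show "\<exists>a. j < k \<and> i < r \<longrightarrow> a \<in> carrier R \<and> v j i = J +> a"
          using v(1) quotient_elem[of "v j i"] unfolding K by (cases "j < k \<and> i < r") auto
      qed
      then show "\<exists>w. \<forall>i. j < k \<and> i < r \<longrightarrow> w i \<in> carrier R \<and> v j i = J +> w i" by (rule choice)
    qed
    then have "\<exists>u. \<forall>j i. j < k \<and> i < r \<longrightarrow> u j i \<in> carrier R \<and> v j i = J +> u j i" by (rule choice)
    then obtain u where u: "\<forall>j i. j < k \<and> i < r \<longrightarrow> u j i \<in> carrier R \<and> v j i = J +> u j i"
      by blast
    have u_vec: "\<forall>j<k. is_vec R r (u j)" using u unfolding is_vec_def by blast
    have "\<forall>j<k. \<forall>i<r. v j i = J +> u j i \<and> J +> u j i \<in> carrier (R Quot J)"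
      using u coset_closed by auto
    then have "indep_mod (R Quot J) ((+>) J ` M) r (\<lambda>j i. J +> u j i) k"
      using Q.indep_mod_cong[of k r v, where M="(+>) J ` M"] v(2) by simp
    then have "indep_mod R M r u k" using indep_mod_quotient_iff[OF u_vec] by blast
    moreover have "\<forall>j<k. u j \<in> P"
    proof (intro allI impI)
      fix j assume "j < k"
      then show "u j \<in> P" using in_K_iff[of "u j" "v j"] u_vec u v(1) by simp
    qed
    ultimately show "\<exists>u. (\<forall>j<k. u j \<in> P) \<and> indep_mod R M r u k" by blast
  next
    assume "\<exists>u. (\<forall>j<k. u j \<in> P) \<and> indep_mod R M r u k"
    then obtain u where u: "\<forall>j<k. u j \<in> P" "indep_mod R M r u k" by blast
    have u_vec: "\<forall>j<k. is_vec R r (u j)" using u(1) unfolding P_def cotangent_coords_def r_def by blast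
    have "\<forall>j<k. (\<lambda>i. J +> u j i) \<in> K"
    proof (intro allI impI)
      fix j assume "j < k"
      then show "(\<lambda>i. J +> u j i) \<in> K" using in_K_iff[of "u j" "\<lambda>i. J +> u j i"] u_vec u(1) by simp
    qed
    moreover have "indep_mod (R Quot J) ((+>) J ` M) r (\<lambda>j i. J +> u j i) k"
      using indep_mod_quotient_iff[OF u_vec] u(2) by blast
    ultimately show "\<exists>v. (\<forall>j<k. v j \<in> K) \<and> indep_mod (R Quot J) ((+>) J ` M) r v k"
      by (intro exI[of _ "\<lambda>j i. J +> u j i"]) simp
  qed
  then show ?thesis
    unfolding rd_def dim_mod_def Let_def xs[symmetric] r_def[symmetric] max_ideal_quotient K_def[symmetric] P_def
    by simp
qed

end

context local_cring
begin

lemma generating_list_coords: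
  assumes "generating_list R M ys" "x \<in> M"
  obtains \<gamma> where "is_vec R (length ys) \<gamma>" "x = lincomb ys \<gamma>"
proof -
  have "x \<in> Idl (set ys)" using assms unfolding generating_list_def by blast
  then show ?thesis
    using that genideal_eq_lincombs[OF generating_list_closed[OF assms(1)]] unfolding is_vec_def by blast
qed

lemma minimal_generating_list_length:
  assumes "minimal_generating_list R M xs" "minimal_generating_list R M ys"
  shows "length xs = length ys"
  using assms unfolding minimal_generating_list_def by (simp add: le_antisym)

lemma minimal_generating_list_if_length:
  assumes "minimal_generating_list R M xs" "generating_list R M ys" "length ys = length xs"
  shows "minimal_generating_list R M ys"
  using assms unfolding minimal_generating_list_def by simp

lemma minimal_generating_list_prefix_coeffs_in_M:
  assumes gen: "minimal_generating_list R M (xs @ zs)"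
    and e: "\<forall>i<length xs. e i \<in> carrier R" and sq: "lincomb xs e \<in> ideal_sq R M"
  shows "\<forall>i<length xs. e i \<in> M"
proof -
  define e' where "e' i = (if i < length xs then e i else \<zero>)" for i
  have xsc: "set (xs @ zs) \<subseteq> carrier R"
    using gen generating_list_closed unfolding minimal_generating_list_def by blast
  have "lincomb (xs @ zs) e' = (\<Oplus>i\<in>{..<length xs}. (xs @ zs) ! i \<otimes> e' i)"
    unfolding lincomb_def by (rule finsum_extend_zero) (use xsc e in \<open>auto simp: e'_def Pi_def\<close>)
  also have "\<dots> = lincomb xs e"
    unfolding lincomb_def using xsc e by (intro finsum_cong') (auto simp: e'_def nth_append Pi_def)
  finally have "lincomb (xs @ zs) e' \<in> ideal_sq R M" using sq by simp
  moreover have "\<forall>i<length (xs @ zs). e' i \<in> carrier R" using e unfolding e'_def by simp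
  ultimately have "\<forall>i<length (xs @ zs). e' i \<in> M"
    using minimal_generating_list_coeffs_in_M[OF gen] by blast
  then show ?thesis unfolding e'_def by (metis length_append trans_less_add1)
qed

lemma in_span_mod_lincomb_congruent:
  assumes xs: "generating_list R M xs" and L: "finite L" and u: "\<forall>l\<in>L. is_vec R (length xs) (u l)"
    and \<alpha>: "is_vec R (length xs) \<alpha>" and span: "in_span_mod R M (length xs) L u \<alpha>"
  obtains \<beta> where "\<forall>l\<in>L. \<beta> l \<in> carrier R"
    "lincomb xs \<alpha> \<ominus> (\<Oplus>l\<in>L. \<beta> l \<otimes> lincomb xs (u l)) \<in> ideal_sq R M"
proof -
  have xsc: "set xs \<subseteq> carrier R" using generating_list_closed[OF xs] .
  have xsM: "set xs \<subseteq> M" using xs unfolding generating_list_def by blast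
  obtain \<beta> where \<beta>: "\<forall>l\<in>L. \<beta> l \<in> carrier R" "\<forall>i<length xs. \<alpha> i \<ominus> (\<Oplus>l\<in>L. \<beta> l \<otimes> u l i) \<in> M"
    using span unfolding in_span_mod_def by blast
  have uc: "\<And>l i. l \<in> L \<Longrightarrow> i < length xs \<Longrightarrow> u l i \<in> carrier R" using u unfolding is_vec_def by blast
  have \<alpha>c: "\<And>i. i < length xs \<Longrightarrow> \<alpha> i \<in> carrier R" using \<alpha> unfolding is_vec_def by blast
  have sc: "\<And>i. i < length xs \<Longrightarrow> (\<Oplus>l\<in>L. \<beta> l \<otimes> u l i) \<in> carrier R"
    using \<beta> uc by (auto intro!: finsum_closed)
  have "(\<Oplus>l\<in>L. \<beta> l \<otimes> lincomb xs (u l)) = lincomb xs (\<lambda>i. \<Oplus>l\<in>L. \<beta> l \<otimes> u l i)"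
    by (rule lincomb_finsum[OF L xsc]) (use \<beta> uc in auto)
  then have "lincomb xs \<alpha> \<ominus> (\<Oplus>l\<in>L. \<beta> l \<otimes> lincomb xs (u l))
      = lincomb xs (\<lambda>i. \<alpha> i \<ominus> (\<Oplus>l\<in>L. \<beta> l \<otimes> u l i))"
    using lincomb_diff[OF xsc, of \<alpha> "\<lambda>i. \<Oplus>l\<in>L. \<beta> l \<otimes> u l i"] \<alpha>c sc by simp
  also have "\<dots> \<in> ideal_sq R M" by (rule lincomb_in_ideal_sq[OF M_ideal xsM]) (use \<beta>(2) in blast)
  finally show ?thesis using that \<beta>(1) by blast
qed

lemma generating_list_of_basis_lifts:
  assumes ys: "generating_list R M ys"
    and V: "\<forall>i<length ys. is_vec R (length ys) (V i)" "indep_mod R M (length ys) V (length ys)"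
  shows "generating_list R M (map (\<lambda>i. lincomb ys (V i)) [0..<length ys])"
proof -
  define s where "s = length ys"
  define zs where "zs = map (\<lambda>i. lincomb ys (V i)) [0..<s]"
  have ysc: "set ys \<subseteq> carrier R" using generating_list_closed[OF ys] .
  have ysM: "set ys \<subseteq> M" using ys unfolding generating_list_def by blast
  have Vc: "\<And>i t. i < s \<Longrightarrow> t < s \<Longrightarrow> V i t \<in> carrier R" using V(1) unfolding is_vec_def s_def by blast
  have zsM: "set zs \<subseteq> M" unfolding zs_def using lincomb_in_ideal[OF M_ideal ysM] Vc s_def by auto
  then have zsc: "set zs \<subseteq> carrier R" using M_closed by blast
  define K where "K = Idl (set zs)"
  have K: "ideal K R" unfolding K_def using genideal_ideal[OF zsc] .
  have lifts_K: "lincomb ys (V i) \<in> K" if "i < s" for i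
    unfolding K_def zs_def using that genideal_self[OF zsc[unfolded zs_def]] by auto
  have "\<forall>j<s. \<exists>a\<in>K. \<exists>\<epsilon>. (\<forall>t<s. \<epsilon> t \<in> M) \<and> ys ! j = a \<oplus> lincomb ys \<epsilon>"
  proof (intro allI impI)
    fix j assume j: "j < s"
    obtain \<beta> where \<beta>: "\<forall>i\<in>{..<s}. \<beta> i \<in> carrier R"
      "\<forall>t<s. unit_vec R j t \<ominus> (\<Oplus>i\<in>{..<s}. \<beta> i \<otimes> V i t) \<in> M"
      using in_span_mod_full_indep[OF V is_vec_unit_vec] unfolding in_span_mod_def s_def by blast
    define a where "a = (\<Oplus>i\<in>{..<s}. \<beta> i \<otimes> lincomb ys (V i))"
    define \<epsilon> where "\<epsilon> t = unit_vec R j t \<ominus> (\<Oplus>i\<in>{..<s}. \<beta> i \<otimes> V i t)" for t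
    have aK: "a \<in> K" unfolding a_def
      by (rule ideal_finsum_closed[OF K]) (use \<beta> lifts_K ideal.I_l_closed[OF K] in auto)
    have sc: "\<And>t. t < s \<Longrightarrow> (\<Oplus>i\<in>{..<s}. \<beta> i \<otimes> V i t) \<in> carrier R"
      using \<beta> Vc by (auto intro!: finsum_closed)
    have "a = lincomb ys (\<lambda>t. \<Oplus>i\<in>{..<s}. \<beta> i \<otimes> V i t)"
      unfolding a_def by (rule lincomb_finsum[OF _ ysc]) (use \<beta> Vc s_def in auto)
    then have "a \<oplus> lincomb ys \<epsilon> = lincomb ys (\<lambda>t. (\<Oplus>i\<in>{..<s}. \<beta> i \<otimes> V i t) \<oplus> \<epsilon> t)"
      using lincomb_add[OF ysc] sc unfolding \<epsilon>_def s_def by (simp add: unit_vec_def)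
    also have "\<dots> = lincomb ys (unit_vec R j)"
      by (rule lincomb_cong[OF ysc]) (use sc in \<open>auto simp: \<epsilon>_def unit_vec_def s_def a_minus_def add.m_lcomm r_neg\<close>)
    also have "\<dots> = ys ! j" using lincomb_unit_vec[OF ysc] j s_def by simp
    finally have "ys ! j = a \<oplus> lincomb ys \<epsilon>" by simp
    moreover have "\<forall>t<s. \<epsilon> t \<in> M" unfolding \<epsilon>_def using \<beta> by blast
    ultimately show "\<exists>a\<in>K. \<exists>\<epsilon>. (\<forall>t<s. \<epsilon> t \<in> M) \<and> ys ! j = a \<oplus> lincomb ys \<epsilon>"
      using aK by blast
  qed
  then have "set ys \<subseteq> K" using nakayama_generators[OF K ysc] s_def by blast
  then have "M \<subseteq> K" using genideal_minimal[OF K] ys unfolding generating_list_def by blast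
  moreover have "K \<subseteq> M" unfolding K_def using genideal_minimal[OF M_ideal zsM] .
  ultimately show ?thesis using zsM unfolding generating_list_def K_def zs_def s_def by blast
qed

lemma generating_list_coords_family:
  fixes d :: nat
  assumes "generating_list R M ys" "\<forall>l<d. x l \<in> M"
  obtains \<gamma> where "\<forall>l<d. is_vec R (length ys) (\<gamma> l) \<and> x l = lincomb ys (\<gamma> l)"
proof -
  have "\<forall>l. \<exists>\<gamma>. l < d \<longrightarrow> is_vec R (length ys) \<gamma> \<and> x l = lincomb ys \<gamma>"
  proof
    fix l
    show "\<exists>\<gamma>. l < d \<longrightarrow> is_vec R (length ys) \<gamma> \<and> x l = lincomb ys \<gamma>"
    proof (cases "l < d")
      case True
      then obtain \<gamma> where "is_vec R (length ys) \<gamma>" "x l = lincomb ys \<gamma>"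
        using generating_list_coords[OF assms(1)] assms(2) by blast
      then show ?thesis by blast
    qed simp
  qed
  then show ?thesis
    using that choice[of "\<lambda>l \<gamma>. l < d \<longrightarrow> is_vec R (length ys) \<gamma> \<and> x l = lincomb ys \<gamma>"] by blast
qed

lemma ideal_congruent_to_dim_basis:
  assumes xs: "generating_list R M xs" and I: "ideal I R" "\<one> \<notin> I"
    and d: "d = dim_mod R M (length xs) (cotangent_coords R M xs I)"
    and u: "\<forall>j<d. u j \<in> cotangent_coords R M xs I" "indep_mod R M (length xs) u d"
    and a: "a \<in> I"
  obtains \<beta> where "\<forall>l\<in>{..<d}. \<beta> l \<in> carrier R"
    "a \<ominus> (\<Oplus>l\<in>{..<d}. \<beta> l \<otimes> lincomb xs (u l)) \<in> ideal_sq R M"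
proof -
  define P where "P = cotangent_coords R M xs I"
  have P: "P \<subseteq> {a. is_vec R (length xs) a}" unfolding P_def cotangent_coords_def by blast
  have "a \<in> M" using proper_ideal_subset_M[OF I] a by blast
  then obtain \<alpha> where \<alpha>: "is_vec R (length xs) \<alpha>" "a = lincomb xs \<alpha>"
    using generating_list_coords[OF xs] by metis
  have "a \<in> I <+>\<^bsub>R\<^esub> ideal_sq R M"
    using a union_subset_set_add[OF I(1) ideal_sq_ideal] M_closed by blast
  then have "\<alpha> \<in> P" unfolding P_def cotangent_coords_def using \<alpha> by simp
  then have "in_span_mod R M (length xs) {..<d} u \<alpha>"
    using in_span_mod_dim_basis[OF P] u unfolding P_def d by blast
  moreover have "\<forall>l\<in>{..<d}. is_vec R (length xs) (u l)" using u(1) P unfolding P_def by blast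
  ultimately show ?thesis
    using in_span_mod_lincomb_congruent[OF xs finite_lessThan _ \<alpha>(1)] that \<alpha>(2) by blast
qed

lemma indep_mod_prefix:
  assumes u: "\<forall>j<k. is_vec R r (u j)" and indep: "indep_mod R M r u k" and "d \<le> k"
  shows "indep_mod R M r u d"
  unfolding indep_mod_def
proof (intro allI impI)
  fix c j assume c: "(\<forall>j<d. c j \<in> carrier R) \<and> (\<forall>i<r. (\<Oplus>j\<in>{..<d}. c j \<otimes> u j i) \<in> M)"
    and j: "j < d"
  define c' where "c' j = (if j < d then c j else \<zero>)" for j
  have "(\<Oplus>j\<in>{..<k}. c' j \<otimes> u j i) = (\<Oplus>j\<in>{..<d}. c j \<otimes> u j i)" if "i < r" for i
  proof -
    have "(\<Oplus>j\<in>{..<k}. c' j \<otimes> u j i) = (\<Oplus>j\<in>{..<d}. c' j \<otimes> u j i)"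
      by (rule finsum_extend_zero) (use u c that \<open>d \<le> k\<close> in \<open>auto simp: c'_def is_vec_def Pi_def\<close>)
    also have "\<dots> = (\<Oplus>j\<in>{..<d}. c j \<otimes> u j i)"
      using u c that \<open>d \<le> k\<close> by (intro finsum_cong') (auto simp: c'_def is_vec_def Pi_def)
    finally show ?thesis .
  qed
  then have "\<forall>i<r. (\<Oplus>j\<in>{..<k}. c' j \<otimes> u j i) \<in> M" using c by simp
  moreover have "\<forall>j<k. c' j \<in> carrier R" using c unfolding c'_def by simp
  ultimately have "\<forall>j<k. c' j \<in> M" using indep unfolding indep_mod_def by blast
  then show "c j \<in> M" using j \<open>d \<le> k\<close> unfolding c'_def by (metis order_less_le_trans)
qed

end

locale local_ring_hom = A: local_cring A m + B: local_cring B n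
  for A (structure) and m and B (structure) and n +
  fixes \<phi> assumes hom: "\<phi> \<in> ring_hom A B" and max_ideal_image: "\<phi> ` m \<subseteq> n"
begin

sublocale ring_hom_cring A B \<phi>
  by (rule ring_hom_cringI[OF A.is_cring B.is_cring hom])

lemma hom_M: "a \<in> m \<Longrightarrow> \<phi> a \<in> n"
  using max_ideal_image by blast

lemma hom_ideal_sq: "a \<in> ideal_sq A m \<Longrightarrow> \<phi> a \<in> ideal_sq B n"
proof -
  define V where "V = {a \<in> carrier A. \<phi> a \<in> ideal_sq B n}"
  have V: "ideal V A" unfolding V_def
    using ring_hom_ring.ideal_vimage[OF ring_hom_ringI2[OF A.ring_axioms B.ring_axioms hom]
        B.ideal_sq_ideal] B.M_closed by blast
  have "{a \<otimes> b | a b. a \<in> m \<and> b \<in> m} \<subseteq> V"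
  proof
    fix z assume "z \<in> {a \<otimes> b | a b. a \<in> m \<and> b \<in> m}"
    then obtain a b where ab: "a \<in> m" "b \<in> m" "z = a \<otimes> b" by blast
    have "\<phi> z = \<phi> a \<otimes>\<^bsub>B\<^esub> \<phi> b" using ab A.M_closed by simp
    then have "\<phi> z \<in> ideal_sq B n" using B.ideal_sq_mult[OF _ hom_M[OF ab(1)] hom_M[OF ab(2)]] B.M_closed by auto
    then show "z \<in> V" unfolding V_def using ab A.M_closed by simp
  qed
  then have "ideal_sq A m \<subseteq> V" unfolding ideal_sq_def using A.genideal_minimal[OF V] by blast
  then show "a \<in> ideal_sq A m \<Longrightarrow> \<phi> a \<in> ideal_sq B n" unfolding V_def by blast
qed

lemma hom_finsum_mult:
  assumes "finite S" "\<And>i. i \<in> S \<Longrightarrow> f i \<in> carrier A" "\<And>i. i \<in> S \<Longrightarrow> g i \<in> carrier A"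
  shows "\<phi> (\<Oplus>i\<in>S. f i \<otimes> g i) = (\<Oplus>\<^bsub>B\<^esub>i\<in>S. \<phi> (f i) \<otimes>\<^bsub>B\<^esub> \<phi> (g i))"
proof -
  have "\<phi> (\<Oplus>i\<in>S. f i \<otimes> g i) = (\<Oplus>\<^bsub>B\<^esub>i\<in>S. \<phi> (f i \<otimes> g i))"
    using hom_finsum[of "\<lambda>i. f i \<otimes> g i" S] assms by (auto simp: Pi_def comp_def)
  also have "\<dots> = (\<Oplus>\<^bsub>B\<^esub>i\<in>S. \<phi> (f i) \<otimes>\<^bsub>B\<^esub> \<phi> (g i))"
    using assms by (intro B.finsum_cong') (auto simp: Pi_def)
  finally show ?thesis .
qed

lemma hom_diff_finsum_mult:
  assumes "a \<in> carrier A" "finite S" "\<And>i. i \<in> S \<Longrightarrow> f i \<in> carrier A" "\<And>i. i \<in> S \<Longrightarrow> g i \<in> carrier A"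
  shows "\<phi> (a \<ominus> (\<Oplus>i\<in>S. f i \<otimes> g i)) = \<phi> a \<ominus>\<^bsub>B\<^esub> (\<Oplus>\<^bsub>B\<^esub>i\<in>S. \<phi> (f i) \<otimes>\<^bsub>B\<^esub> \<phi> (g i))"
proof -
  have "(\<Oplus>i\<in>S. f i \<otimes> g i) \<in> carrier A" using assms by (auto intro!: A.finsum_closed)
  then have "\<phi> (a \<ominus> (\<Oplus>i\<in>S. f i \<otimes> g i)) = \<phi> a \<ominus>\<^bsub>B\<^esub> \<phi> (\<Oplus>i\<in>S. f i \<otimes> g i)"
    using assms(1) by (simp add: A.minus_eq B.minus_eq)
  then show ?thesis using hom_finsum_mult[OF assms(2-4)] by simp
qed

lemma hom_lincomb:
  assumes "set xs \<subseteq> carrier A" "\<And>i. i < length xs \<Longrightarrow> e i \<in> carrier A"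
  shows "\<phi> (A.lincomb xs e) = B.lincomb (map \<phi> xs) (\<lambda>i. \<phi> (e i))"
proof -
  have "\<phi> (A.lincomb xs e) = (\<Oplus>\<^bsub>B\<^esub>i\<in>{..<length xs}. \<phi> (xs ! i) \<otimes>\<^bsub>B\<^esub> \<phi> (e i))"
    unfolding A.lincomb_def by (rule hom_finsum_mult) (use assms in auto)
  also have "\<dots> = B.lincomb (map \<phi> xs) (\<lambda>i. \<phi> (e i))"
    unfolding B.lincomb_def using assms by (intro B.finsum_cong') (auto simp: Pi_def)
  finally show ?thesis .
qed

lemma hom_set_add_ideal_sq:
  assumes I: "ideal I A" and a: "a \<in> I <+>\<^bsub>A\<^esub> ideal_sq A m"
  shows "\<phi> a \<in> Idl\<^bsub>B\<^esub> (\<phi> ` I) <+>\<^bsub>B\<^esub> ideal_sq B n"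
proof -
  obtain x y where xy: "x \<in> I" "y \<in> ideal_sq A m" "a = x \<oplus> y" using a unfolding set_add_iff by blast
  have "x \<in> carrier A" "y \<in> carrier A"
    using xy ideal.Icarr[OF I] ideal.Icarr[OF A.ideal_sq_ideal] A.M_closed by auto
  then have "\<phi> a = \<phi> x \<oplus>\<^bsub>B\<^esub> \<phi> y" using xy by simp
  moreover have "\<phi> x \<in> Idl\<^bsub>B\<^esub> (\<phi> ` I)"
    using xy(1) B.genideal_self[of "\<phi> ` I"] ideal.Icarr[OF I] by blast
  ultimately show ?thesis using hom_ideal_sq[OF xy(2)] unfolding set_add_iff by blast
qed

lemma hom_in_span_mod:
  assumes L: "finite L" and g: "\<forall>l\<in>L. is_vec A r (g l)" and a: "is_vec A r a"
    and span: "in_span_mod A m r L g a"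
  shows "in_span_mod B n r L (\<lambda>l i. \<phi> (g l i)) (\<lambda>i. \<phi> (a i))"
proof -
  obtain \<beta> where \<beta>: "\<forall>l\<in>L. \<beta> l \<in> carrier A" "\<forall>i<r. a i \<ominus> (\<Oplus>l\<in>L. \<beta> l \<otimes> g l i) \<in> m"
    using span unfolding in_span_mod_def by blast
  show ?thesis
    unfolding in_span_mod_def
  proof (intro exI[of _ "\<lambda>l. \<phi> (\<beta> l)"] conjI ballI allI impI)
    show "\<phi> (\<beta> l) \<in> carrier B" if "l \<in> L" for l using \<beta> that by simp
    fix i assume i: "i < r"
    have gc: "\<And>l. l \<in> L \<Longrightarrow> g l i \<in> carrier A" using g i unfolding is_vec_def by blast
    have "\<phi> (a i \<ominus> (\<Oplus>l\<in>L. \<beta> l \<otimes> g l i))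
        = \<phi> (a i) \<ominus>\<^bsub>B\<^esub> (\<Oplus>\<^bsub>B\<^esub>l\<in>L. \<phi> (\<beta> l) \<otimes>\<^bsub>B\<^esub> \<phi> (g l i))"
      by (rule hom_diff_finsum_mult) (use a i L \<beta> gc in \<open>auto simp: is_vec_def\<close>)
    then show "\<phi> (a i) \<ominus>\<^bsub>B\<^esub> (\<Oplus>\<^bsub>B\<^esub>l\<in>L. \<phi> (\<beta> l) \<otimes>\<^bsub>B\<^esub> \<phi> (g l i)) \<in> n"
      using hom_M \<beta>(2) i by metis
  qed
qed

lemma indep_mod_hom_image_basis:
  assumes u: "\<forall>l<r. is_vec A r (u l)" "indep_mod A m r u r"
  shows "indep_mod B n r (\<lambda>l i. \<phi> (u l i)) r"
proof (rule ccontr)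
  define g where "g l i = \<phi> (u l i)" for l i
  assume "\<not> indep_mod B n r (\<lambda>l i. \<phi> (u l i)) r"
  then have dep: "\<not> indep_mod_on B n r g {..<r}" unfolding g_def indep_mod_iff_on .
  have g_vec: "\<forall>l\<in>{..<r}. is_vec B r (g l)" using u unfolding g_def is_vec_def by simp
  define P where "P = {unit_vec B t | t. t < r}"
  have P: "P \<subseteq> {a. is_vec B r a}" unfolding P_def using B.is_vec_unit_vec by blast
  have "\<forall>a\<in>P. in_span_mod B n r {..<r} g a"
  proof
    fix a assume "a \<in> P"
    then obtain t where a: "a = unit_vec B t" by (auto simp: P_def)
    have "in_span_mod A m r {..<r} u (unit_vec A t)"
      using A.in_span_mod_full_indep[OF u A.is_vec_unit_vec] .
    then have "in_span_mod B n r {..<r} g (\<lambda>i. \<phi> (unit_vec A t i))"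
      unfolding g_def by (intro hom_in_span_mod) (use u A.is_vec_unit_vec in auto)
    moreover have "(\<lambda>i. \<phi> (unit_vec A t i)) = unit_vec B t" by (auto simp: unit_vec_def)
    ultimately show "in_span_mod B n r {..<r} g a" using a by simp
  qed
  then have "dim_mod B n r P < r" using B.dim_mod_less_card_if_dependent[OF P _ g_vec dep] by simp
  moreover have "r \<le> dim_mod B n r P"
    by (rule B.dim_mod_ge[OF P, of r "unit_vec B"]) (use B.indep_mod_unit_vecs in \<open>auto simp: P_def\<close>)
  ultimately show False by simp
qed

lemma indep_mod_hom_image:
  assumes u: "\<forall>l<d. is_vec A r (u l)" "indep_mod A m r u d"
  shows "indep_mod B n r (\<lambda>l i. \<phi> (u l i)) d"
proof -
  have "d \<le> r" using A.indep_mod_le[OF u] .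
  then obtain u' where u': "\<forall>j<d. u' j = u j" "\<forall>j<r. is_vec A r (u' j)" "indep_mod A m r u' r"
    using A.indep_mod_extend[OF u] by blast
  have "indep_mod B n r (\<lambda>l i. \<phi> (u' l i)) d"
    by (rule B.indep_mod_prefix[OF _ indep_mod_hom_image_basis[OF u'(2,3)] \<open>d \<le> r\<close>])
      (use u'(2) in \<open>auto simp: is_vec_def\<close>)
  moreover have "\<forall>j<d. \<forall>i<r. \<phi> (u' j i) = \<phi> (u j i) \<and> \<phi> (u j i) \<in> carrier B"
    using u' u unfolding is_vec_def by auto
  ultimately show ?thesis using B.indep_mod_cong[of d r "\<lambda>l i. \<phi> (u' l i)", where M=n] by simp
qed

lemma dim_cotangent_extension_le:
  assumes xs: "generating_list A m xs" and ys: "minimal_generating_list B n ys"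
    and I: "ideal I A" "\<one> \<notin> I"
  shows "dim_mod B n (length ys) (cotangent_coords B n ys (Idl\<^bsub>B\<^esub> (\<phi> ` I)))
      \<le> dim_mod A m (length xs) (cotangent_coords A m xs I)"
proof -
  define r where "r = length xs"
  define s where "s = length ys"
  define PA where "PA = cotangent_coords A m xs I"
  define PB where "PB = cotangent_coords B n ys (Idl\<^bsub>B\<^esub> (\<phi> ` I))"
  have xsc: "set xs \<subseteq> carrier A" using A.generating_list_closed[OF xs] .
  have xsm: "set xs \<subseteq> m" using xs unfolding generating_list_def by blast
  have ys_gen: "generating_list B n ys" using ys unfolding minimal_generating_list_def by blast
  have PA_vec: "PA \<subseteq> {a. is_vec A r a}" unfolding PA_def cotangent_coords_def r_def by blast
  have PB_vec: "PB \<subseteq> {a. is_vec B s a}" unfolding PB_def cotangent_coords_def s_def by blast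
  define d where "d = dim_mod A m r PA"
  obtain u where u: "\<forall>j<d. u j \<in> PA" "indep_mod A m r u d"
    using A.dim_mod_witness[OF PA_vec] unfolding d_def by blast
  have u_vec: "\<forall>l<d. is_vec A r (u l)" using u(1) PA_vec by blast
  have images_n: "\<forall>l<d. \<phi> (A.lincomb xs (u l)) \<in> n"
    using A.lincomb_in_ideal[OF A.M_ideal xsm] u_vec hom_M unfolding is_vec_def r_def by blast
  obtain \<gamma> where \<gamma>: "\<forall>l<d. is_vec B s (\<gamma> l) \<and> \<phi> (A.lincomb xs (u l)) = B.lincomb ys (\<gamma> l)"
    using B.generating_list_coords_family[OF ys_gen images_n] unfolding s_def by blast
  have \<gamma>c: "\<And>l. l < d \<Longrightarrow> B.lincomb ys (\<gamma> l) \<in> carrier B"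
    using B.lincomb_closed[OF B.generating_list_closed[OF ys_gen]] \<gamma> unfolding is_vec_def s_def by blast
  have gens: "\<forall>x\<in>\<phi> ` I. \<exists>\<beta>. (\<forall>l<d. \<beta> l \<in> carrier B) \<and>
      x \<ominus>\<^bsub>B\<^esub> (\<Oplus>\<^bsub>B\<^esub>l\<in>{..<d}. \<beta> l \<otimes>\<^bsub>B\<^esub> B.lincomb ys (\<gamma> l)) \<in> ideal_sq B n"
  proof
    fix x assume "x \<in> \<phi> ` I"
    then obtain a where a: "a \<in> I" "x = \<phi> a" by blast
    obtain \<beta> where \<beta>: "\<forall>l\<in>{..<d}. \<beta> l \<in> carrier A"
        "a \<ominus> (\<Oplus>l\<in>{..<d}. \<beta> l \<otimes> A.lincomb xs (u l)) \<in> ideal_sq A m"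
      using A.ideal_congruent_to_dim_basis[OF xs I d_def[unfolded PA_def r_def] u[unfolded PA_def r_def] a(1)]
      by blast
    have zc: "\<And>l. l < d \<Longrightarrow> A.lincomb xs (u l) \<in> carrier A"
      using A.lincomb_closed[OF xsc] u_vec unfolding is_vec_def r_def by blast
    have "\<phi> (a \<ominus> (\<Oplus>l\<in>{..<d}. \<beta> l \<otimes> A.lincomb xs (u l)))
        = \<phi> a \<ominus>\<^bsub>B\<^esub> (\<Oplus>\<^bsub>B\<^esub>l\<in>{..<d}. \<phi> (\<beta> l) \<otimes>\<^bsub>B\<^esub> \<phi> (A.lincomb xs (u l)))"
      by (rule hom_diff_finsum_mult) (use \<beta>(1) zc a(1) ideal.Icarr[OF I(1)] in auto)
    also have "(\<Oplus>\<^bsub>B\<^esub>l\<in>{..<d}. \<phi> (\<beta> l) \<otimes>\<^bsub>B\<^esub> \<phi> (A.lincomb xs (u l)))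
        = (\<Oplus>\<^bsub>B\<^esub>l\<in>{..<d}. \<phi> (\<beta> l) \<otimes>\<^bsub>B\<^esub> B.lincomb ys (\<gamma> l))"
    proof (intro B.finsum_cong')
      fix l assume "l \<in> {..<d}"
      then show "\<phi> (\<beta> l) \<otimes>\<^bsub>B\<^esub> \<phi> (A.lincomb xs (u l)) = \<phi> (\<beta> l) \<otimes>\<^bsub>B\<^esub> B.lincomb ys (\<gamma> l)"
        using \<gamma> by simp
    qed (use \<beta>(1) zc \<gamma>c in \<open>auto simp: Pi_def\<close>)
    finally have "x \<ominus>\<^bsub>B\<^esub> (\<Oplus>\<^bsub>B\<^esub>l\<in>{..<d}. \<phi> (\<beta> l) \<otimes>\<^bsub>B\<^esub> B.lincomb ys (\<gamma> l)) \<in> ideal_sq B n"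
      using hom_ideal_sq[OF \<beta>(2)] a(2) by simp
    then show "\<exists>\<beta>. (\<forall>l<d. \<beta> l \<in> carrier B) \<and>
        x \<ominus>\<^bsub>B\<^esub> (\<Oplus>\<^bsub>B\<^esub>l\<in>{..<d}. \<beta> l \<otimes>\<^bsub>B\<^esub> B.lincomb ys (\<gamma> l)) \<in> ideal_sq B n"
      using \<beta>(1) by (intro exI[of _ "\<lambda>l. \<phi> (\<beta> l)"]) simp
  qed
  have "\<forall>w\<in>PB. in_span_mod B n s {..<d} \<gamma> w"
  proof
    fix w assume "w \<in> PB"
    then show "in_span_mod B n s {..<d} \<gamma> w" unfolding s_def
      by (intro B.in_span_mod_of_generators[OF ys _ _ gens])
        (use \<gamma> ideal.Icarr[OF I(1)] in \<open>auto simp: PB_def cotangent_coords_def s_def\<close>)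
  qed
  then have "dim_mod B n s PB \<le> card {..<d}"
    by (intro B.dim_mod_le_span_card[OF PB_vec]) (use \<gamma> in auto)
  then show ?thesis unfolding d_def PA_def PB_def r_def s_def by simp
qed

lemma dim_cotangent_le_extension:
  assumes xs: "generating_list A m xs" and ys: "generating_list B n ys"
    and ext: "minimal_generating_list B n (map \<phi> xs @ zs)" and I: "ideal I A"
  shows "dim_mod A m (length xs) (cotangent_coords A m xs I)
      \<le> dim_mod B n (length ys) (cotangent_coords B n ys (Idl\<^bsub>B\<^esub> (\<phi> ` I)))"
proof -
  define r where "r = length xs"
  define s where "s = length ys"
  define PA where "PA = cotangent_coords A m xs I"
  define PB where "PB = cotangent_coords B n ys (Idl\<^bsub>B\<^esub> (\<phi> ` I))"
  have xsc: "set xs \<subseteq> carrier A" using A.generating_list_closed[OF xs] .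
  have xsm: "set xs \<subseteq> m" using xs unfolding generating_list_def by blast
  have ysc: "set ys \<subseteq> carrier B" using B.generating_list_closed[OF ys] .
  have \<phi>xsc: "set (map \<phi> xs) \<subseteq> carrier B" using xsc by auto
  have PA_vec: "PA \<subseteq> {a. is_vec A r a}" unfolding PA_def cotangent_coords_def r_def by blast
  have PB_vec: "PB \<subseteq> {a. is_vec B s a}" unfolding PB_def cotangent_coords_def s_def by blast
  define d where "d = dim_mod A m r PA"
  obtain u where u: "\<forall>j<d. u j \<in> PA" "indep_mod A m r u d"
    using A.dim_mod_witness[OF PA_vec] unfolding d_def by blast
  have u_vec: "\<forall>l<d. is_vec A r (u l)" using u(1) PA_vec by blast
  have uc: "\<And>l i. l < d \<Longrightarrow> i < r \<Longrightarrow> u l i \<in> carrier A" using u_vec unfolding is_vec_def by blast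
  have images_n: "\<forall>l<d. \<phi> (A.lincomb xs (u l)) \<in> n"
    using A.lincomb_in_ideal[OF A.M_ideal xsm] uc hom_M unfolding r_def by blast
  obtain w where w: "\<forall>l<d. is_vec B s (w l) \<and> \<phi> (A.lincomb xs (u l)) = B.lincomb ys (w l)"
    using B.generating_list_coords_family[OF ys images_n] unfolding s_def by blast
  have wc: "\<And>l j. l < d \<Longrightarrow> j < s \<Longrightarrow> w l j \<in> carrier B" using w unfolding is_vec_def by blast
  have "\<forall>l<d. w l \<in> PB"
  proof (intro allI impI)
    fix l assume l: "l < d"
    have "A.lincomb xs (u l) \<in> I <+>\<^bsub>A\<^esub> ideal_sq A m" using u(1) l unfolding PA_def cotangent_coords_def by blast
    then have "\<phi> (A.lincomb xs (u l)) \<in> Idl\<^bsub>B\<^esub> (\<phi> ` I) <+>\<^bsub>B\<^esub> ideal_sq B n"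
      by (rule hom_set_add_ideal_sq[OF I])
    then show "w l \<in> PB" unfolding PB_def cotangent_coords_def using w l s_def by simp
  qed
  moreover have "indep_mod B n s w d"
    unfolding indep_mod_def
  proof (intro allI impI)
    fix c l assume c: "(\<forall>j<d. c j \<in> carrier B) \<and> (\<forall>i<s. (\<Oplus>\<^bsub>B\<^esub>j\<in>{..<d}. c j \<otimes>\<^bsub>B\<^esub> w j i) \<in> n)"
      and l: "l < d"
    define e where "e i = (\<Oplus>\<^bsub>B\<^esub>j\<in>{..<d}. c j \<otimes>\<^bsub>B\<^esub> \<phi> (u j i))" for i
    have "B.lincomb ys (\<lambda>i. \<Oplus>\<^bsub>B\<^esub>j\<in>{..<d}. c j \<otimes>\<^bsub>B\<^esub> w j i) \<in> ideal_sq B n"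
      by (rule B.lincomb_in_ideal_sq[OF B.M_ideal]) (use ys c s_def in \<open>auto simp: generating_list_def\<close>)
    moreover have "B.lincomb ys (\<lambda>i. \<Oplus>\<^bsub>B\<^esub>j\<in>{..<d}. c j \<otimes>\<^bsub>B\<^esub> w j i) = B.lincomb (map \<phi> xs) e"
    proof -
      have "B.lincomb ys (\<lambda>i. \<Oplus>\<^bsub>B\<^esub>j\<in>{..<d}. c j \<otimes>\<^bsub>B\<^esub> w j i)
          = (\<Oplus>\<^bsub>B\<^esub>j\<in>{..<d}. c j \<otimes>\<^bsub>B\<^esub> B.lincomb ys (w j))"
        by (rule B.lincomb_finsum[symmetric]) (use ysc c wc s_def in auto)
      also have "\<dots> = (\<Oplus>\<^bsub>B\<^esub>j\<in>{..<d}. c j \<otimes>\<^bsub>B\<^esub> B.lincomb (map \<phi> xs) (\<lambda>i. \<phi> (u j i)))"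
      proof (intro B.finsum_cong')
        fix j assume "j \<in> {..<d}"
        then show "c j \<otimes>\<^bsub>B\<^esub> B.lincomb ys (w j) = c j \<otimes>\<^bsub>B\<^esub> B.lincomb (map \<phi> xs) (\<lambda>i. \<phi> (u j i))"
          using w hom_lincomb[OF xsc] uc unfolding r_def by simp
      qed (use c uc B.lincomb_closed[OF \<phi>xsc] r_def in \<open>auto simp: Pi_def\<close>)
      also have "\<dots> = B.lincomb (map \<phi> xs) e"
        unfolding e_def by (rule B.lincomb_finsum) (use xsc c uc r_def in auto)
      finally show ?thesis .
    qed
    ultimately have "B.lincomb (map \<phi> xs) e \<in> ideal_sq B n" by simp
    moreover have "\<forall>i<length (map \<phi> xs). e i \<in> carrier B"
      unfolding e_def using c uc r_def by (auto intro!: B.finsum_closed)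
    ultimately have "\<forall>i<r. e i \<in> n"
      using B.minimal_generating_list_prefix_coeffs_in_M[OF ext] unfolding r_def by simp
    then have "\<forall>j<d. c j \<in> n"
      using indep_mod_hom_image[OF u_vec u(2)] c unfolding indep_mod_def e_def by blast
    then show "c l \<in> n" using l by blast
  qed
  ultimately have "d \<le> dim_mod B n s PB" using B.dim_mod_ge[OF PB_vec] by blast
  then show ?thesis unfolding d_def PA_def PB_def r_def s_def .
qed

lemma extends_to_minimal_generating_list:
  assumes xs: "minimal_generating_list A m xs" and ys: "minimal_generating_list B n ys"
    and xs': "minimal_generating_list A m xs'"
    and eq: "dim_mod A m (length xs) (cotangent_coords A m xs m)
      = dim_mod B n (length ys) (cotangent_coords B n ys (Idl\<^bsub>B\<^esub> (\<phi> ` m)))"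
  shows "\<exists>zs. minimal_generating_list B n (map \<phi> xs' @ zs)"
proof -
  define r where "r = length xs'"
  define s where "s = length ys"
  define PA where "PA = cotangent_coords A m xs m"
  define PB where "PB = cotangent_coords B n ys (Idl\<^bsub>B\<^esub> (\<phi> ` m))"
  have xs_gen: "generating_list A m xs" and ys_gen: "generating_list B n ys"
    and xs'_gen: "generating_list A m xs'"
    using xs ys xs' unfolding minimal_generating_list_def by blast+
  have r: "length xs = r" using A.minimal_generating_list_length[OF xs xs'] unfolding r_def .
  have xsc: "set xs \<subseteq> carrier A" "set xs' \<subseteq> carrier A"
    using A.generating_list_closed xs_gen xs'_gen by blast+
  have ysc: "set ys \<subseteq> carrier B" using B.generating_list_closed[OF ys_gen] .
  have PA_vec: "PA \<subseteq> {a. is_vec A r a}" unfolding PA_def cotangent_coords_def r[symmetric] by blast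
  have PB_vec: "PB \<subseteq> {a. is_vec B s a}" unfolding PB_def cotangent_coords_def s_def by blast
  have "\<forall>j<r. unit_vec A j \<in> PA"
  proof (intro allI impI)
    fix j assume "j < r"
    then have "A.lincomb xs (unit_vec A j) \<in> m"
      using A.lincomb_unit_vec[OF xsc(1)] xs_gen r unfolding generating_list_def by auto
    then show "unit_vec A j \<in> PA" unfolding PA_def cotangent_coords_def
      using A.union_subset_set_add[OF A.M_ideal A.ideal_sq_ideal] A.M_closed A.is_vec_unit_vec by blast
  qed
  then have "r \<le> dim_mod A m r PA" using A.dim_mod_ge[OF PA_vec] A.indep_mod_unit_vecs by blast
  then have dim_PB: "dim_mod B n s PB = r"
    using A.dim_mod_le[OF PA_vec] eq unfolding PA_def PB_def r s_def by simp
  have images_n: "\<forall>i<r. \<phi> (xs' ! i) \<in> n" using xs'_gen hom_M unfolding generating_list_def r_def by auto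
  obtain V where V: "\<forall>i<r. is_vec B s (V i) \<and> \<phi> (xs' ! i) = B.lincomb ys (V i)"
    using B.generating_list_coords_family[OF ys_gen images_n] unfolding s_def by blast
  have V_vec: "\<forall>i\<in>{..<r}. is_vec B s (V i)" using V by blast
  have V_lincomb: "\<And>i. i < r \<Longrightarrow> B.lincomb ys (V i) \<in> carrier B"
    using B.lincomb_closed[OF ysc] V unfolding is_vec_def s_def by blast
  have gens: "\<forall>x\<in>\<phi> ` m. \<exists>\<beta>. (\<forall>l<r. \<beta> l \<in> carrier B) \<and>
      x \<ominus>\<^bsub>B\<^esub> (\<Oplus>\<^bsub>B\<^esub>l\<in>{..<r}. \<beta> l \<otimes>\<^bsub>B\<^esub> B.lincomb ys (V l)) \<in> ideal_sq B n"
  proof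
    fix x assume "x \<in> \<phi> ` m"
    then obtain a where a: "a \<in> m" "x = \<phi> a" by blast
    obtain \<alpha> where \<alpha>: "is_vec A r \<alpha>" "a = A.lincomb xs' \<alpha>"
      using A.generating_list_coords[OF xs'_gen a(1)] unfolding r_def by metis
    have "x = (\<Oplus>\<^bsub>B\<^esub>i\<in>{..<r}. \<phi> (xs' ! i) \<otimes>\<^bsub>B\<^esub> \<phi> (\<alpha> i))"
      unfolding a(2) \<alpha>(2) A.lincomb_def r_def[symmetric]
      by (rule hom_finsum_mult) (use xsc \<alpha>(1) r_def in \<open>auto simp: is_vec_def\<close>)
    also have "\<dots> = (\<Oplus>\<^bsub>B\<^esub>i\<in>{..<r}. \<phi> (\<alpha> i) \<otimes>\<^bsub>B\<^esub> B.lincomb ys (V i))"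
    proof (intro B.finsum_cong')
      fix i assume "i \<in> {..<r}"
      then show "\<phi> (xs' ! i) \<otimes>\<^bsub>B\<^esub> \<phi> (\<alpha> i) = \<phi> (\<alpha> i) \<otimes>\<^bsub>B\<^esub> B.lincomb ys (V i)"
        using V V_lincomb \<alpha>(1) B.m_comm unfolding is_vec_def r_def by (metis hom_closed lessThan_iff)
    qed (use V_lincomb \<alpha>(1) in \<open>auto simp: Pi_def is_vec_def\<close>)
    finally have x_eq: "x = (\<Oplus>\<^bsub>B\<^esub>i\<in>{..<r}. \<phi> (\<alpha> i) \<otimes>\<^bsub>B\<^esub> B.lincomb ys (V i))" .
    have "x \<in> carrier B" using a hom_M B.M_closed by blast
    then have "x \<ominus>\<^bsub>B\<^esub> (\<Oplus>\<^bsub>B\<^esub>i\<in>{..<r}. \<phi> (\<alpha> i) \<otimes>\<^bsub>B\<^esub> B.lincomb ys (V i)) = \<zero>\<^bsub>B\<^esub>"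
      unfolding x_eq[symmetric] by (simp add: B.r_neg B.minus_eq)
    then show "\<exists>\<beta>. (\<forall>l<r. \<beta> l \<in> carrier B) \<and>
        x \<ominus>\<^bsub>B\<^esub> (\<Oplus>\<^bsub>B\<^esub>l\<in>{..<r}. \<beta> l \<otimes>\<^bsub>B\<^esub> B.lincomb ys (V l)) \<in> ideal_sq B n"
      using \<alpha>(1) ideal_zero_closed[OF B.ideal_sq_ideal] B.M_closed unfolding is_vec_def
      by (intro exI[of _ "\<lambda>l. \<phi> (\<alpha> l)"]) auto
  qed
  have "\<forall>w\<in>PB. in_span_mod B n s {..<r} V w"
  proof
    fix w assume "w \<in> PB"
    then show "in_span_mod B n s {..<r} V w" unfolding s_def
      by (intro B.in_span_mod_of_generators[OF ys _ _ gens])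
        (use V A.M_closed in \<open>auto simp: PB_def cotangent_coords_def s_def\<close>)
  qed
  then have V_indep: "indep_mod B n s V r"
    using B.dim_mod_less_card_if_dependent[OF PB_vec finite_lessThan V_vec] dim_PB
    unfolding indep_mod_iff_on by fastforce
  have "r \<le> s" using B.indep_mod_le[OF _ V_indep] V by blast
  then obtain V' where V': "\<forall>i<r. V' i = V i" "\<forall>i<s. is_vec B s (V' i)" "indep_mod B n s V' s"
    using B.indep_mod_extend[OF _ V_indep, of s] V by blast
  define zs where "zs = map (\<lambda>i. B.lincomb ys (V' i)) [r..<s]"
  have "map (\<lambda>i. B.lincomb ys (V' i)) [0..<s] = map \<phi> xs' @ zs"
  proof -
    have "map (\<lambda>i. B.lincomb ys (V' i)) [0..<r] = map \<phi> xs'"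
      using V V'(1) unfolding r_def by (intro nth_equalityI) auto
    moreover have "[0..<s] = [0..<r] @ [r..<s]" using \<open>r \<le> s\<close> upt_add_eq_append[of 0 r "s - r"] by simp
    ultimately show ?thesis unfolding zs_def by simp
  qed
  then have "generating_list B n (map \<phi> xs' @ zs)"
    using B.generating_list_of_basis_lifts[OF ys_gen] V'(2,3) unfolding s_def by metis
  moreover have "length (map \<phi> xs' @ zs) = length ys" unfolding zs_def using \<open>r \<le> s\<close> r_def s_def by simp
  ultimately show ?thesis using B.minimal_generating_list_if_length[OF ys] by blast
qed

end

lemma (in local_ring_hom) extension_ideal_proper:
  assumes "ideal I A" "\<one> \<notin> I"
  shows "ideal (Idl\<^bsub>B\<^esub> (\<phi> ` I)) B" "\<one>\<^bsub>B\<^esub> \<notin> Idl\<^bsub>B\<^esub> (\<phi> ` I)"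
proof -
  have "\<phi> ` I \<subseteq> n" using A.proper_ideal_subset_M[OF assms] max_ideal_image by blast
  then have "Idl\<^bsub>B\<^esub> (\<phi> ` I) \<subseteq> n" using B.genideal_minimal[OF B.M_ideal] by blast
  then show "\<one>\<^bsub>B\<^esub> \<notin> Idl\<^bsub>B\<^esub> (\<phi> ` I)" using B.one_notin_M by blast
  show "ideal (Idl\<^bsub>B\<^esub> (\<phi> ` I)) B" by (rule B.genideal_ideal) (use ideal.Icarr[OF assms(1)] in auto)
qed

lemma noetherian_local_ring_local_cring:
  assumes "noetherian_local_ring R"
  shows "local_cring R (max_ideal R)"
proof -
  have unique: "\<exists>!m. maximalideal m R" using assms unfolding noetherian_local_ring_def by blast
  have "maximalideal (max_ideal R) R" unfolding max_ideal_def using theI'[OF unique] .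
  moreover have "\<And>N. maximalideal N R \<Longrightarrow> N = max_ideal R"
    unfolding max_ideal_def using unique the1_equality by metis
  moreover have "cring R" using assms unfolding noetherian_local_ring_def noetherian_ring_def by blast
  ultimately show ?thesis unfolding local_cring_def local_cring_axioms_def by blast
qed

lemma noetherian_local_ring_minimal_basis_iff:
  assumes R: "noetherian_local_ring R"
  shows "minimal_basis R xs \<longleftrightarrow> minimal_generating_list R (max_ideal R) xs"
proof -
  interpret local_cring R "max_ideal R" using noetherian_local_ring_local_cring[OF R] .
  obtain S where S: "finite S" "S \<subseteq> carrier R" "max_ideal R = Idl\<^bsub>R\<^esub> S"
    using R M_ideal unfolding noetherian_local_ring_def noetherian_ring_def by blast
  obtain xs0 where "set xs0 = S" using finite_list[OF S(1)] by blast
  then have "generating_list R (max_ideal R) xs0"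
    using S genideal_self unfolding generating_list_def by blast
  then have ex: "\<exists>k xs. length xs = k \<and> generating_list R (max_ideal R) xs" by blast
  have num_gens: "num_gens R (max_ideal R) = (LEAST k. \<exists>xs. length xs = k \<and> generating_list R (max_ideal R) xs)"
    unfolding num_gens_def generating_list_def by simp
  show ?thesis
  proof
    assume "minimal_basis R xs"
    then show "minimal_generating_list R (max_ideal R) xs"
      unfolding minimal_basis_def minimal_generating_list_def num_gens generating_list_def
      by (auto intro: Least_le)
  next
    assume xs: "minimal_generating_list R (max_ideal R) xs"
    then have "num_gens R (max_ideal R) = length xs"
      unfolding num_gens minimal_generating_list_def by (intro Least_equality) auto
    then show "minimal_basis R xs"
      using xs unfolding minimal_basis_def minimal_generating_list_def generating_list_def by simp
  qed
qed

lemma noetherian_local_ring_some_minimal_basis: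
  assumes R: "noetherian_local_ring R"
  shows "minimal_generating_list R (max_ideal R) (SOME xs. minimal_basis R xs)"
proof -
  interpret local_cring R "max_ideal R" using noetherian_local_ring_local_cring[OF R] .
  obtain S where S: "finite S" "S \<subseteq> carrier R" "max_ideal R = Idl\<^bsub>R\<^esub> S"
    using R M_ideal unfolding noetherian_local_ring_def noetherian_ring_def by blast
  obtain xs0 where "set xs0 = S" using finite_list[OF S(1)] by blast
  then have "\<exists>k xs. length xs = k \<and> set xs \<subseteq> max_ideal R \<and> Idl\<^bsub>R\<^esub> (set xs) = max_ideal R"
    using S genideal_self by blast
  then obtain xs where "length xs = num_gens R (max_ideal R)" "set xs \<subseteq> max_ideal R" "Idl\<^bsub>R\<^esub> (set xs) = max_ideal R"
    unfolding num_gens_def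
    using LeastI_ex[of "\<lambda>k. \<exists>xs. length xs = k \<and> set xs \<subseteq> max_ideal R \<and> Idl\<^bsub>R\<^esub> (set xs) = max_ideal R"]
    by blast
  then have "minimal_basis R xs" unfolding minimal_basis_def by blast
  then show ?thesis using someI[of "minimal_basis R"] noetherian_local_ring_minimal_basis_iff[OF R] by blast
qed

lemma rd_quotient_eq_dim_mod:
  assumes R: "noetherian_local_ring R" and J: "ideal J R" "J \<noteq> carrier R"
  shows "rd R (R Quot J) (\<lambda>a. J +>\<^bsub>R\<^esub> a) = dim_mod R (max_ideal R) (length (SOME xs. minimal_basis R xs))
      (cotangent_coords R (max_ideal R) (SOME xs. minimal_basis R xs) J)"
proof -
  interpret local_quotient R "max_ideal R" J
    using noetherian_local_ring_local_cring[OF R] J ideal.one_imp_carrier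
    unfolding local_quotient_def local_quotient_axioms_def by blast
  have "set (SOME xs. minimal_basis R xs) \<subseteq> carrier R"
    using noetherian_local_ring_some_minimal_basis[OF R] generating_list_closed
    unfolding minimal_generating_list_def by blast
  then show ?thesis using rd_quotient by simp
qed

lemma noetherian_local_ring_hom:
  assumes "noetherian_local_ring A" "noetherian_local_ring B" "local_hom A B \<phi>"
  shows "local_ring_hom A (max_ideal A) B (max_ideal B) \<phi>"
proof -
  have "local_cring A (max_ideal A)" "local_cring B (max_ideal B)"
    using noetherian_local_ring_local_cring assms(1,2) by blast+
  moreover have "\<phi> \<in> ring_hom A B" "\<phi> ` max_ideal A \<subseteq> max_ideal B"
    using assms(3) unfolding local_hom_def by blast+
  ultimately show ?thesis unfolding local_ring_hom_def local_ring_hom_axioms_def by blast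
qed

lemma rd_extension_eq_dim_mod:
  assumes A: "noetherian_local_ring A" and B: "noetherian_local_ring B" and \<phi>: "local_hom A B \<phi>"
    and I: "ideal I A" "I \<noteq> carrier A"
  shows "rd B (B Quot (Idl\<^bsub>B\<^esub> (\<phi> ` I))) (\<lambda>b. (Idl\<^bsub>B\<^esub> (\<phi> ` I)) +>\<^bsub>B\<^esub> b)
      = dim_mod B (max_ideal B) (length (SOME ys. minimal_basis B ys))
          (cotangent_coords B (max_ideal B) (SOME ys. minimal_basis B ys) (Idl\<^bsub>B\<^esub> (\<phi> ` I)))"
proof -
  interpret local_ring_hom A "max_ideal A" B "max_ideal B" \<phi>
    using noetherian_local_ring_hom[OF A B \<phi>] .
  have "\<one>\<^bsub>A\<^esub> \<notin> I" using I ideal.one_imp_carrier by blast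
  then have "ideal (Idl\<^bsub>B\<^esub> (\<phi> ` I)) B" "Idl\<^bsub>B\<^esub> (\<phi> ` I) \<noteq> carrier B"
    using extension_ideal_proper[OF I(1)] by blast+
  then show ?thesis using rd_quotient_eq_dim_mod[OF B] by blast
qed

lemma rd_extension_le:
  assumes A: "noetherian_local_ring A" and B: "noetherian_local_ring B" and \<phi>: "local_hom A B \<phi>"
    and I: "ideal I A" "I \<noteq> carrier A"
  shows "rd B (B Quot (Idl\<^bsub>B\<^esub> (\<phi> ` I))) (\<lambda>b. (Idl\<^bsub>B\<^esub> (\<phi> ` I)) +>\<^bsub>B\<^esub> b) \<le> rd A (A Quot I) (\<lambda>a. I +>\<^bsub>A\<^esub> a)"
proof -
  interpret local_ring_hom A "max_ideal A" B "max_ideal B" \<phi>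
    using noetherian_local_ring_hom[OF A B \<phi>] .
  have "\<one>\<^bsub>A\<^esub> \<notin> I" using I ideal.one_imp_carrier by blast
  then show ?thesis
    unfolding rd_quotient_eq_dim_mod[OF A I] rd_extension_eq_dim_mod[OF A B \<phi> I]
    by (intro dim_cotangent_extension_le[OF _ noetherian_local_ring_some_minimal_basis[OF B] I(1)])
      (use noetherian_local_ring_some_minimal_basis[OF A] in \<open>simp_all add: minimal_generating_list_def\<close>)
qed

lemma rd_extension_eq_if_basically_regular:
  assumes A: "noetherian_local_ring A" and B: "noetherian_local_ring B" and \<phi>: "local_hom A B \<phi>"
    and regular: "basically_regular A B \<phi>" and I: "ideal I A" "I \<noteq> carrier A"
  shows "rd A (A Quot I) (\<lambda>a. I +>\<^bsub>A\<^esub> a) = rd B (B Quot (Idl\<^bsub>B\<^esub> (\<phi> ` I))) (\<lambda>b. (Idl\<^bsub>B\<^esub> (\<phi> ` I)) +>\<^bsub>B\<^esub> b)"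
proof -
  interpret local_ring_hom A "max_ideal A" B "max_ideal B" \<phi>
    using noetherian_local_ring_hom[OF A B \<phi>] .
  define xs where "xs = (SOME xs. minimal_basis A xs)"
  have xs: "minimal_generating_list A (max_ideal A) xs"
    unfolding xs_def using noetherian_local_ring_some_minimal_basis[OF A] .
  then obtain zs where "minimal_basis B (map \<phi> xs @ zs)"
    using regular noetherian_local_ring_minimal_basis_iff[OF A] unfolding basically_regular_def by blast
  then have "minimal_generating_list B (max_ideal B) (map \<phi> xs @ zs)"
    using noetherian_local_ring_minimal_basis_iff[OF B] by blast
  then have "rd A (A Quot I) (\<lambda>a. I +>\<^bsub>A\<^esub> a) \<le> rd B (B Quot (Idl\<^bsub>B\<^esub> (\<phi> ` I))) (\<lambda>b. (Idl\<^bsub>B\<^esub> (\<phi> ` I)) +>\<^bsub>B\<^esub> b)"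
    unfolding rd_quotient_eq_dim_mod[OF A I] rd_extension_eq_dim_mod[OF A B \<phi> I] xs_def[symmetric]
    by (intro dim_cotangent_le_extension[OF _ _ _ I(1)])
      (use xs noetherian_local_ring_some_minimal_basis[OF B] in \<open>simp_all add: minimal_generating_list_def\<close>)
  then show ?thesis using rd_extension_le[OF A B \<phi> I] by simp
qed

lemma basically_regular_if_rd_eq:
  assumes A: "noetherian_local_ring A" and B: "noetherian_local_ring B" and \<phi>: "local_hom A B \<phi>"
    and eq: "rd A (A Quot max_ideal A) (\<lambda>a. max_ideal A +>\<^bsub>A\<^esub> a)
      = rd B (B Quot (Idl\<^bsub>B\<^esub> (\<phi> ` max_ideal A))) (\<lambda>b. (Idl\<^bsub>B\<^esub> (\<phi> ` max_ideal A)) +>\<^bsub>B\<^esub> b)"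
  shows "basically_regular A B \<phi>"
  unfolding basically_regular_def
proof (intro allI impI)
  interpret local_ring_hom A "max_ideal A" B "max_ideal B" \<phi>
    using noetherian_local_ring_hom[OF A B \<phi>] .
  fix xs' assume "minimal_basis A xs'"
  then have xs': "minimal_generating_list A (max_ideal A) xs'"
    using noetherian_local_ring_minimal_basis_iff[OF A] by blast
  have m: "ideal (max_ideal A) A" "max_ideal A \<noteq> carrier A" using A.M_ideal A.one_notin_M by auto
  obtain zs where "minimal_generating_list B (max_ideal B) (map \<phi> xs' @ zs)"
    using extends_to_minimal_generating_list[OF noetherian_local_ring_some_minimal_basis[OF A]
        noetherian_local_ring_some_minimal_basis[OF B] xs']
      eq unfolding rd_quotient_eq_dim_mod[OF A m] rd_extension_eq_dim_mod[OF A B \<phi> m] by blast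
  then show "\<exists>zs. minimal_basis B (map \<phi> xs' @ zs)"
    using noetherian_local_ring_minimal_basis_iff[OF B] by blast
qed

theorem corollary2p16:
  fixes A :: "('a, 'c) ring_scheme" and B :: "('b, 'd) ring_scheme" and \<phi> :: "'a \<Rightarrow> 'b"
  assumes "noetherian_local_ring A" and "noetherian_local_ring B" and "local_hom A B \<phi>"
  shows "(\<forall>I. ideal I A \<and> I \<noteq> carrier A \<longrightarrow>
            rd A (A Quot I) (\<lambda>a. I +>\<^bsub>A\<^esub> a)
              \<ge> rd B (B Quot (Idl\<^bsub>B\<^esub> (\<phi> ` I))) (\<lambda>b. (Idl\<^bsub>B\<^esub> (\<phi> ` I)) +>\<^bsub>B\<^esub> b))
       \<and> (basically_regular A B \<phi> \<longleftrightarrow>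
          (\<forall>I. ideal I A \<and> I \<noteq> carrier A \<longrightarrow>
            rd A (A Quot I) (\<lambda>a. I +>\<^bsub>A\<^esub> a)
              = rd B (B Quot (Idl\<^bsub>B\<^esub> (\<phi> ` I))) (\<lambda>b. (Idl\<^bsub>B\<^esub> (\<phi> ` I)) +>\<^bsub>B\<^esub> b)))"
proof -
  interpret local_cring A "max_ideal A" using noetherian_local_ring_local_cring[OF assms(1)] .
  have "ideal (max_ideal A) A" "max_ideal A \<noteq> carrier A" using M_ideal one_notin_M by auto
  then show ?thesis
    using rd_extension_le[OF assms] rd_extension_eq_if_basically_regular[OF assms]
      basically_regular_if_rd_eq[OF assms] by blast
qed

end
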